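(* Let $k>1$ divide $n+1$ and let $(a,0)$ be a general point of $\mathcal U_{n/k}$, so that $A=\int a$ satisfies $A=\tilde A\circ W$ with $\deg W=k$, $W(0)=W(1)$, $\deg\tilde A=(n+1)/k$. Then the Zariski tangent space $T_{(a,0)}\mathcal U_{n/k}$ is the vector space of pairs of polynomials $(p_1,q_1)$ of degree at most $n$ whose primitives $P_1=\int p_1$, $Q_1=\int q_1$ can be written as $$P_1(x)=\tilde P_1(W(x))+R(x)\,\tilde A'(W(x)),\qquad Q_1(x)=\tilde Q_1(W(x)),$$ where $\tilde P_1,\tilde Q_1$ are arbitrary polynomials of degree at most $(n+1)/k$ and $R$ is any polynomial of degree (at most) $k$ with $R(0)=R(1)$.
   Context: Work over $\mathbb C$. $\mathcal A_n\cong\mathbb C^{2n+2}$ is the vector space of pairs $(a,b)$ of polynomials of degree at most $n$. For $k>1$ dividing $n+1$, $\mathcal U_{n/k}\subset\mathcal A_n$ is the Zariski closure of the set of pairs $(a,b)$ for which there exist polynomials $\tilde A,\tilde B,W$ of degrees $(n+1)/k,(n+1)/k,k$ with $\int a=\tilde A\circ W$, $\int b=\tilde B\circ W$ (up to additive constants) and $W(0)=W(1)$. "General point" means a point in a suitable nonempty Zariski open subset. *)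

theory Defs
  imports "HOL-Analysis.Analysis" "HOL-Computational_Algebra.Polynomial"
begin

text \<open>The affine space A_n of pairs of polynomials of degree at most n (identified with C^(2n+2)
  via coefficients).\<close>
definition An :: "nat \<Rightarrow> (complex poly \<times> complex poly) set" where
  "An n = {(a, b). degree a \<le> n \<and> degree b \<le> n}"

inductive_set polyfun :: "nat \<Rightarrow> (complex poly \<times> complex poly \<Rightarrow> complex) set" for n where
  const: "(\<lambda>x. c) \<in> polyfun n"
| coordA: "i \<le> n \<Longrightarrow> (\<lambda>x. coeff (fst x) i) \<in> polyfun n"
| coordB: "i \<le> n \<Longrightarrow> (\<lambda>x. coeff (snd x) i) \<in> polyfun n"
| add: "f \<in> polyfun n \<Longrightarrow> g \<in> polyfun n \<Longrightarrow> (\<lambda>x. f x + g x) \<in> polyfun n"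
| mult: "f \<in> polyfun n \<Longrightarrow> g \<in> polyfun n \<Longrightarrow> (\<lambda>x. f x * g x) \<in> polyfun n"

definition vanishing_ideal :: "nat \<Rightarrow> (complex poly \<times> complex poly) set
    \<Rightarrow> (complex poly \<times> complex poly \<Rightarrow> complex) set" where
  "vanishing_ideal n S = {f \<in> polyfun n. \<forall>s\<in>S. f s = 0}"

definition zariski_closure :: "nat \<Rightarrow> (complex poly \<times> complex poly) set
    \<Rightarrow> (complex poly \<times> complex poly) set" where
  "zariski_closure n S = {x \<in> An n. \<forall>f \<in> vanishing_ideal n S. f x = 0}"

definition zariski_tangent :: "nat \<Rightarrow> (complex poly \<times> complex poly) set
    \<Rightarrow> complex poly \<times> complex poly \<Rightarrow> (complex poly \<times> complex poly) set" where
  "zariski_tangent n V p = {v \<in> An n. \<forall>f \<in> vanishing_ideal n V.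
      ((\<lambda>t. f (fst p + smult t (fst v), snd p + smult t (snd v))) has_field_derivative 0) (at 0)}"

text \<open>The primitive of a polynomial with zero constant term.\<close>
definition prim :: "complex poly \<Rightarrow> complex poly" where
  "prim p = (\<Sum>i\<le>degree p. monom (coeff p i / of_nat (Suc i)) (Suc i))"

text \<open>U_{n/k}: Zariski closure of pairs (a,b) with int a = A~ o W, int b = B~ o W (up to additive
  constants, absorbed in the constant terms of A~, B~), deg A~ = deg B~ = (n+1)/k, deg W = k,
  W(0) = W(1).\<close>
definition U_set :: "nat \<Rightarrow> nat \<Rightarrow> (complex poly \<times> complex poly) set" where
  "U_set n k = zariski_closure n {(a, b) \<in> An n. \<exists>At Bt W.
      degree At = (n + 1) div k \<and> degree Bt = (n + 1) div k \<and> degree W = k \<and>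
      poly W 0 = poly W 1 \<and> prim a = pcompose At W \<and> prim b = pcompose Bt W}"

end

theory Submission
  imports Defs
begin

text \<open>A general point is one where the leading coefficient c of a is nonzero. On the open set
  c \<noteq> 0 the decomposition data of a pair (a, b) can be read off by functions that are polynomial
  up to a power of c in the denominator: with m = (n+1)/k, the monic inner polynomial V with
  V(0) = 0 is determined by the top k coefficients of A = \<integral>a (an approximate m-th root), and the
  outer polynomials are obtained by successively subtracting multiples of powers of V from A and
  B = \<integral>b. The remainders and V(1) vanish on decomposable pairs, hence on the Zariski closure
  wherever c \<noteq> 0, and so do their derivatives along tangent vectors. Differentiating
  A = G \<circ> V and B = H \<circ> V at (a, 0) gives the stated form of a tangent vector. Conversely, a pair
  of that form is the velocity at t = 0 of the curve of decomposable pairs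
  t \<mapsto> (((A~ + t P~) \<circ> (W + t R))', ((t Q~ + t^2 x^m) \<circ> (W + t R))').\<close>

section \<open>Primitives and compositions of polynomials\<close>

lemma coeff_prim: "coeff (prim p) j = (if j = 0 then 0 else coeff p (j - 1) / of_nat j)"
proof -
  have "coeff (prim p) j = (\<Sum>i\<le>degree p. if Suc i = j then coeff p i / of_nat (Suc i) else 0)"
    unfolding prim_def coeff_sum by (simp del: of_nat_Suc)
  also have "\<dots> = (if j = 0 then 0 else coeff p (j - 1) / of_nat j)"
  proof (cases j)
    case (Suc i)
    then show ?thesis
      by (cases "i \<le> degree p") (simp_all add: sum.delta coeff_eq_0)
  qed simp
  finally show ?thesis .
qed

lemma prim_add: "prim (p + q) = prim p + prim q"
  by (rule poly_eqI) (simp add: coeff_prim add_divide_distrib)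

lemma prim_smult: "prim (smult t p) = smult t (prim p)"
  by (rule poly_eqI) (simp add: coeff_prim)

lemma prim_0 [simp]: "prim 0 = 0"
  by (rule poly_eqI) (simp add: coeff_prim)

lemma pderiv_prim [simp]: "pderiv (prim p) = p"
  by (rule poly_eqI) (simp add: coeff_prim coeff_pderiv del: of_nat_Suc)

lemma prim_pderiv: "prim (pderiv p) = p - [:coeff p 0:]"
  by (rule poly_eqI)
    (auto simp: coeff_prim coeff_pderiv coeff_pCons split: nat.splits simp del: of_nat_Suc)

lemma pcompose_monom: "pcompose (monom a i) q = smult a (q ^ i)"
  by (induction i) (auto simp: monom_Suc pcompose_pCons pcompose_smult monom_0 smult_pCons)

lemma pcompose_eq_sum_powers:
  assumes "degree p \<le> D"
  shows "pcompose p q = (\<Sum>i\<le>D. smult (coeff p i) (q ^ i))"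
proof -
  have "pcompose p q = pcompose (\<Sum>i\<le>D. monom (coeff p i) i) q"
    using poly_as_sum_of_monoms'[OF assms] by simp
  then show ?thesis
    by (simp add: pcompose_sum pcompose_monom)
qed

lemma poly_eq_sum_bounded:
  fixes p :: "complex poly"
  assumes "degree p \<le> D"
  shows "poly p x = (\<Sum>i\<le>D. coeff p i * x ^ i)"
proof -
  have "poly p x = poly (\<Sum>i\<le>D. monom (coeff p i) i) x"
    using poly_as_sum_of_monoms'[OF assms] by simp
  also have "\<dots> = (\<Sum>i\<le>D. coeff p i * x ^ i)"
    by (simp add: poly_sum poly_monom)
  finally show ?thesis .
qed

lemma pcompose_cancel_right:
  fixes p q V :: "'a::idom poly"
  assumes "pcompose p V = pcompose q V" "degree V > 0"
  shows "p = q"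
  using pcompose_eq_0[of "p - q" V] assms by (simp add: pcompose_diff)

lemma degree_eq_of_coeff_nonzero:
  assumes "degree p \<le> d" "coeff p d \<noteq> 0"
  shows "degree p = d"
  using assms le_degree by (metis antisym)

lemma degree_diff_const:
  fixes G :: "'a::comm_ring poly"
  assumes "degree G \<ge> 1"
  shows "degree (G - [:c:]) = degree G"
proof -
  have "degree (G + (- [:c:])) = degree G"
    using assms by (intro degree_add_eq_left) simp
  then show ?thesis
    by (simp add: diff_conv_add_uminus del: add_uminus_conv_diff)
qed

lemma coeff_mult_degree_bounds:
  fixes p q :: "'a::comm_semiring_0 poly"
  assumes "degree p \<le> a" "degree q \<le> b"
  shows "coeff (p * q) (a + b) = coeff p a * coeff q b"
proof -
  have "coeff (p * q) (a + b) = (\<Sum>i\<le>a + b. if i = a then coeff p a * coeff q b else 0)"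
    unfolding coeff_mult
  proof (rule sum.cong)
    fix i assume "i \<in> {..a + b}"
    show "coeff p i * coeff q (a + b - i) = (if i = a then coeff p a * coeff q b else 0)"
    proof (cases "i < a")
      case True
      then have "coeff q (a + b - i) = 0"
        using assms(2) by (intro coeff_eq_0) linarith
      then show ?thesis using True by simp
    next
      case False
      then show ?thesis using assms(1) by (cases "i = a") (auto simp: coeff_eq_0)
    qed
  qed simp
  then show ?thesis by simp
qed

lemma coeff_sum_monom_top:
  assumes "j < k"
  shows "coeff (\<Sum>i\<in>{1..j}. monom (f i) (k - i)) l = (if l < k \<and> k - j \<le> l then f (k - l) else 0)"
proof -
  have "coeff (\<Sum>i\<in>{1..j}. monom (f i) (k - i)) l
      = (\<Sum>i\<in>{1..j}. if i = k - l \<and> l < k then f (k - l) else 0)"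
    unfolding coeff_sum by (rule sum.cong) (use assms in auto)
  also have "\<dots> = (if l < k \<and> k - j \<le> l then f (k - l) else 0)"
  proof (cases "l < k")
    case True
    then have "(\<Sum>i\<in>{1..j}. if i = k - l \<and> l < k then f (k - l) else 0)
        = (if k - l \<in> {1..j} then f (k - l) else 0)"
      by (simp add: sum.delta)
    then show ?thesis using True assms by auto
  qed simp
  finally show ?thesis .
qed

definition normalized_inner :: "complex poly \<Rightarrow> complex poly" where
  "normalized_inner W = smult (1 / lead_coeff W) (W - [:poly W 0:])"

lemma normalized_inner:
  fixes W :: "complex poly"
  assumes "degree W = k" "1 \<le> k"
  shows "degree (normalized_inner W) = k" "coeff (normalized_inner W) k = 1"
    "coeff (normalized_inner W) 0 = 0"
    "poly (normalized_inner W) 1 = (poly W 1 - poly W 0) / lead_coeff W"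
    "pcompose [:poly W 0, lead_coeff W:] (normalized_inner W) = W"
proof -
  have lc: "lead_coeff W \<noteq> 0"
    using assms by auto
  have "degree (W - [:poly W 0:]) = k"
    using assms by (simp add: degree_diff_const)
  then show "degree (normalized_inner W) = k"
    using lc by (simp add: normalized_inner_def)
  show "coeff (normalized_inner W) k = 1"
    using lc assms by (cases k) (auto simp: coeff_pCons normalized_inner_def)
  show "coeff (normalized_inner W) 0 = 0"
    by (simp add: poly_0_coeff_0 normalized_inner_def)
  show "poly (normalized_inner W) 1 = (poly W 1 - poly W 0) / lead_coeff W"
    by (simp add: normalized_inner_def)
  show "pcompose [:poly W 0, lead_coeff W:] (normalized_inner W) = W"
    using lc by (simp add: pcompose_pCons smult_diff_right normalized_inner_def)
qed

section \<open>Derivatives of curves of polynomials\<close>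

definition has_poly_derivative :: "(complex \<Rightarrow> complex poly) \<Rightarrow> complex poly \<Rightarrow> bool" where
  "has_poly_derivative H d \<longleftrightarrow> (\<forall>j. ((\<lambda>t. coeff (H t) j) has_field_derivative coeff d j) (at 0))"

lemma has_poly_derivative_coeff:
  "has_poly_derivative H d \<Longrightarrow> ((\<lambda>t. coeff (H t) j) has_field_derivative coeff d j) (at 0)"
  unfolding has_poly_derivative_def by blast

lemma has_poly_derivative_unique:
  "has_poly_derivative H d1 \<Longrightarrow> has_poly_derivative H d2 \<Longrightarrow> d1 = d2"
  unfolding has_poly_derivative_def by (rule poly_eqI) (meson DERIV_unique)

lemma has_poly_derivative_const: "has_poly_derivative (\<lambda>t. p) 0"
  unfolding has_poly_derivative_def by simp

lemma has_poly_derivative_line: "has_poly_derivative (\<lambda>t. p + smult t q) q"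
  unfolding has_poly_derivative_def by (auto intro!: derivative_eq_intros)

lemma has_poly_derivative_add:
  "has_poly_derivative P d1 \<Longrightarrow> has_poly_derivative Q d2 \<Longrightarrow>
    has_poly_derivative (\<lambda>t. P t + Q t) (d1 + d2)"
  unfolding has_poly_derivative_def by (auto intro!: derivative_intros)

lemma has_poly_derivative_diff:
  "has_poly_derivative P d1 \<Longrightarrow> has_poly_derivative Q d2 \<Longrightarrow>
    has_poly_derivative (\<lambda>t. P t - Q t) (d1 - d2)"
  unfolding has_poly_derivative_def by (auto intro!: derivative_intros)

lemma has_poly_derivative_sum:
  "finite I \<Longrightarrow> (\<And>i. i \<in> I \<Longrightarrow> has_poly_derivative (P i) (d i)) \<Longrightarrow>
    has_poly_derivative (\<lambda>t. \<Sum>i\<in>I. P i t) (\<Sum>i\<in>I. d i)"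
  unfolding has_poly_derivative_def coeff_sum by (auto intro!: DERIV_sum)

lemma has_poly_derivative_smult:
  assumes "(h has_field_derivative dh) (at 0)" "has_poly_derivative P d"
  shows "has_poly_derivative (\<lambda>t. smult (h t) (P t)) (smult dh (P 0) + smult (h 0) d)"
  using assms unfolding has_poly_derivative_def by (auto intro!: derivative_eq_intros)

lemma has_poly_derivative_mult:
  assumes "has_poly_derivative P d1" "has_poly_derivative Q d2"
  shows "has_poly_derivative (\<lambda>t. P t * Q t) (d1 * Q 0 + P 0 * d2)"
  unfolding has_poly_derivative_def
proof
  fix j
  have "((\<lambda>t. \<Sum>i\<le>j. coeff (P t) i * coeff (Q t) (j - i)) has_field_derivative
      (\<Sum>i\<le>j. coeff (P 0) i * coeff d2 (j - i) + coeff d1 i * coeff (Q 0) (j - i))) (at 0)"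
    using assms unfolding has_poly_derivative_def by (auto intro!: DERIV_sum DERIV_mult')
  then show "((\<lambda>t. coeff (P t * Q t) j) has_field_derivative coeff (d1 * Q 0 + P 0 * d2) j) (at 0)"
    by (simp add: coeff_mult sum.distrib add.commute)
qed

lemma has_poly_derivative_power:
  assumes "has_poly_derivative P d"
  shows "has_poly_derivative (\<lambda>t. P t ^ i) (of_nat i * P 0 ^ (i - 1) * d)"
proof (induction i)
  case 0
  then show ?case using has_poly_derivative_const[of 1] by simp
next
  case (Suc i)
  have "has_poly_derivative (\<lambda>t. P t * P t ^ i) (d * P 0 ^ i + P 0 * (of_nat i * P 0 ^ (i - 1) * d))"
    by (rule has_poly_derivative_mult[OF assms Suc])
  moreover have "d * P 0 ^ i + P 0 * (of_nat i * P 0 ^ (i - 1) * d)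
      = of_nat (Suc i) * P 0 ^ (Suc i - 1) * d"
    by (cases i) (auto simp: algebra_simps)
  ultimately show ?case by simp
qed

lemma has_poly_derivative_pderiv:
  "has_poly_derivative H d \<Longrightarrow> has_poly_derivative (\<lambda>t. pderiv (H t)) (pderiv d)"
  unfolding has_poly_derivative_def coeff_pderiv by (auto intro!: DERIV_cmult)

lemma has_poly_derivative_pcompose_right:
  assumes "has_poly_derivative V d"
  shows "has_poly_derivative (\<lambda>t. pcompose p (V t)) (pcompose (pderiv p) (V 0) * d)"
proof (induction p)
  case 0
  then show ?case using has_poly_derivative_const[of 0] by simp
next
  case (pCons a p)
  have "has_poly_derivative (\<lambda>t. [:a:] + V t * pcompose p (V t))
      (0 + (d * pcompose p (V 0) + V 0 * (pcompose (pderiv p) (V 0) * d)))"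
    by (intro has_poly_derivative_add has_poly_derivative_const has_poly_derivative_mult assms pCons)
  moreover have "0 + (d * pcompose p (V 0) + V 0 * (pcompose (pderiv p) (V 0) * d))
      = pcompose (pderiv (pCons a p)) (V 0) * d"
    by (simp add: pderiv_pCons pcompose_add pcompose_pCons algebra_simps)
  ultimately show ?case by (simp add: pcompose_pCons)
qed

lemma degree_poly_derivative_le:
  assumes "has_poly_derivative H d" "\<And>t. degree (H t) \<le> D"
  shows "degree d \<le> D"
proof (rule degree_le, intro allI impI)
  fix j assume "D < j"
  then have "(\<lambda>t. coeff (H t) j) = (\<lambda>t. 0)"
    using assms(2) by (auto intro: coeff_eq_0 le_less_trans)
  then show "coeff d j = 0"
    using has_poly_derivative_coeff[OF assms(1), of j] DERIV_unique DERIV_const by metis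
qed

lemma has_poly_derivative_pcompose:
  assumes "has_poly_derivative G dG" "has_poly_derivative V dV" "\<And>t. degree (G t) \<le> D"
  shows "has_poly_derivative (\<lambda>t. pcompose (G t) (V t))
           (pcompose dG (V 0) + pcompose (pderiv (G 0)) (V 0) * dV)"
proof -
  \<comment> \<open>Split G t \<circ> V t into (G t - G 0) \<circ> V t, whose coefficients vanish at t = 0, plus G 0 \<circ> V t.\<close>
  have split: "pcompose (G t) (V t)
      = (\<Sum>i\<le>D. smult (coeff (G t) i - coeff (G 0) i) (V t ^ i)) + pcompose (G 0) (V t)" for t
  proof -
    have "pcompose (G t - G 0) (V t) = (\<Sum>i\<le>D. smult (coeff (G t - G 0) i) (V t ^ i))"
      by (rule pcompose_eq_sum_powers) (meson assms(3) degree_diff_le)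
    then show ?thesis by (simp add: pcompose_diff algebra_simps)
  qed
  have c: "((\<lambda>t. coeff (G t) i - coeff (G 0) i) has_field_derivative coeff dG i) (at 0)" for i
    using assms(1) unfolding has_poly_derivative_def by (auto intro!: derivative_eq_intros)
  have "has_poly_derivative
      (\<lambda>t. (\<Sum>i\<le>D. smult (coeff (G t) i - coeff (G 0) i) (V t ^ i)) + pcompose (G 0) (V t))
      ((\<Sum>i\<le>D. smult (coeff dG i) (V 0 ^ i)
          + smult (coeff (G 0) i - coeff (G 0) i) (of_nat i * V 0 ^ (i - 1) * dV))
        + pcompose (pderiv (G 0)) (V 0) * dV)"
    by (intro has_poly_derivative_add has_poly_derivative_sum has_poly_derivative_pcompose_right
        assms(2) has_poly_derivative_smult[OF c] has_poly_derivative_power finite_atMost)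
  moreover have "(\<Sum>i\<le>D. smult (coeff dG i) (V 0 ^ i)
          + smult (coeff (G 0) i - coeff (G 0) i) (of_nat i * V 0 ^ (i - 1) * dV))
      = pcompose dG (V 0)"
    using pcompose_eq_sum_powers[OF degree_poly_derivative_le[OF assms(1,3)]] by simp
  ultimately show ?thesis by (simp add: split)
qed

lemma has_poly_derivative_poly:
  assumes "has_poly_derivative H d" "\<And>t. degree (H t) \<le> D"
  shows "((\<lambda>t. poly (H t) x) has_field_derivative poly d x) (at 0)"
proof -
  have "((\<lambda>t. \<Sum>i\<le>D. coeff (H t) i * x ^ i) has_field_derivative (\<Sum>i\<le>D. coeff d i * x ^ i)) (at 0)"
    using assms(1) by (auto intro!: DERIV_sum DERIV_cmult_right has_poly_derivative_coeff)
  then show ?thesis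
    using poly_eq_sum_bounded[OF assms(2)]
      poly_eq_sum_bounded[OF degree_poly_derivative_le[OF assms]] by simp
qed

lemma has_poly_derivative_exists:
  assumes "\<And>t. degree (H t) \<le> D"
    and "\<And>j. j \<le> D \<Longrightarrow> \<exists>d. ((\<lambda>t. coeff (H t) j) has_field_derivative d) (at 0)"
  obtains d where "has_poly_derivative H d"
proof -
  obtain dd where dd: "\<And>j. j \<le> D \<Longrightarrow> ((\<lambda>t. coeff (H t) j) has_field_derivative dd j) (at 0)"
    using assms(2) by metis
  have "has_poly_derivative H (\<Sum>j\<le>D. monom (dd j) j)"
    unfolding has_poly_derivative_def
  proof
    fix j
    show "((\<lambda>t. coeff (H t) j) has_field_derivative coeff (\<Sum>j\<le>D. monom (dd j) j) j) (at 0)"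
    proof (cases "j \<le> D")
      case True
      then show ?thesis using dd[OF True] by (simp add: coeff_sum)
    next
      case False
      then have "(\<lambda>t. coeff (H t) j) = (\<lambda>t. 0)"
        using assms(1) by (auto intro: coeff_eq_0 le_less_trans simp: not_le)
      then show ?thesis using False by (simp add: coeff_sum)
    qed
  qed
  then show ?thesis by (rule that)
qed

lemma nonzero_near_0:
  assumes "(\<alpha>::complex) \<noteq> 0"
  shows "eventually (\<lambda>t. \<alpha> + t * \<beta> \<noteq> 0) (nhds 0)"
proof -
  have "((\<lambda>t. \<alpha> + t * \<beta>) \<longlongrightarrow> \<alpha>) (at (0::complex))"
    by (rule tendsto_eq_intros | simp)+
  then have "eventually (\<lambda>t. \<alpha> + t * \<beta> \<noteq> 0) (at 0)"
    using tendsto_imp_eventually_ne assms by blast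
  then show ?thesis using assms by (simp add: eventually_nhds_conv_at)
qed

section \<open>Polynomial functions on A_n and their localisation at the leading coefficient\<close>

lemma polyfun_chain_rule:
  assumes "f \<in> polyfun n"
  shows "\<exists>Df. \<forall>\<gamma> v. has_poly_derivative (\<lambda>t. fst (\<gamma> t)) (fst v) \<longrightarrow>
           has_poly_derivative (\<lambda>t. snd (\<gamma> t)) (snd v) \<longrightarrow>
           ((\<lambda>t. f (\<gamma> t)) has_field_derivative Df (\<gamma> 0) v) (at 0)"
  using assms
proof (induction rule: polyfun.induct)
  case (const c)
  show ?case by (rule exI[of _ "\<lambda>_ _. 0"]) auto
next
  case (coordA i)
  show ?case
    by (rule exI[of _ "\<lambda>_ v. coeff (fst v) i"]) (auto intro: has_poly_derivative_coeff)
next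
  case (coordB i)
  show ?case
    by (rule exI[of _ "\<lambda>_ v. coeff (snd v) i"]) (auto intro: has_poly_derivative_coeff)
next
  case (add f g)
  then obtain Df Dg where "\<forall>\<gamma> v. has_poly_derivative (\<lambda>t. fst (\<gamma> t)) (fst v) \<longrightarrow>
           has_poly_derivative (\<lambda>t. snd (\<gamma> t)) (snd v) \<longrightarrow>
           ((\<lambda>t. f (\<gamma> t)) has_field_derivative Df (\<gamma> 0) v) (at 0) \<and>
           ((\<lambda>t. g (\<gamma> t)) has_field_derivative Dg (\<gamma> 0) v) (at 0)"
    by blast
  then show ?case
    by (intro exI[of _ "\<lambda>p v. Df p v + Dg p v"]) (auto intro: DERIV_add)
next
  case (mult f g)
  then obtain Df Dg where "\<forall>\<gamma> v. has_poly_derivative (\<lambda>t. fst (\<gamma> t)) (fst v) \<longrightarrow>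
           has_poly_derivative (\<lambda>t. snd (\<gamma> t)) (snd v) \<longrightarrow>
           ((\<lambda>t. f (\<gamma> t)) has_field_derivative Df (\<gamma> 0) v) (at 0) \<and>
           ((\<lambda>t. g (\<gamma> t)) has_field_derivative Dg (\<gamma> 0) v) (at 0)"
    by blast
  then show ?case
    by (intro exI[of _ "\<lambda>p v. Df p v * g p + Dg p v * f p"]) (auto intro: DERIV_mult)
qed

lemma polyfun_differentiable_along_line:
  assumes "f \<in> polyfun n"
  obtains D where "((\<lambda>t. f (a + smult t p, b + smult t q)) has_field_derivative D) (at 0)"
proof -
  obtain Df where Df: "\<And>\<gamma> v. has_poly_derivative (\<lambda>t. fst (\<gamma> t)) (fst v) \<Longrightarrow>
           has_poly_derivative (\<lambda>t. snd (\<gamma> t)) (snd v) \<Longrightarrow>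
           ((\<lambda>t. f (\<gamma> t)) has_field_derivative Df (\<gamma> 0) v) (at 0)"
    using polyfun_chain_rule[OF assms] by blast
  show ?thesis
    using Df[of "\<lambda>t. (a + smult t p, b + smult t q)" "(p, q)"]
    by (intro that) (simp add: has_poly_derivative_line)
qed

lemma curve_velocity_in_zariski_tangent:
  assumes v: "v \<in> An n" and p: "p \<in> V" and \<gamma>0: "\<gamma> 0 = p"
    and \<gamma>V: "\<forall>\<^sub>F t in at 0. \<gamma> t \<in> V"
    and d\<gamma>: "has_poly_derivative (\<lambda>t. fst (\<gamma> t)) (fst v)"
      "has_poly_derivative (\<lambda>t. snd (\<gamma> t)) (snd v)"
  shows "v \<in> zariski_tangent n V p"
  unfolding zariski_tangent_def
proof (intro CollectI conjI v ballI)
  fix f assume f: "f \<in> vanishing_ideal n V"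
  then obtain Df where Df: "\<And>\<gamma> v. has_poly_derivative (\<lambda>t. fst (\<gamma> t)) (fst v) \<Longrightarrow>
           has_poly_derivative (\<lambda>t. snd (\<gamma> t)) (snd v) \<Longrightarrow>
           ((\<lambda>t. f (\<gamma> t)) has_field_derivative Df (\<gamma> 0) v) (at 0)"
    using polyfun_chain_rule unfolding vanishing_ideal_def by blast
  have "\<forall>\<^sub>F t in nhds 0. f (\<gamma> t) = 0"
    unfolding eventually_nhds_conv_at
    using \<gamma>V f p \<gamma>0 by (auto elim!: eventually_mono simp: vanishing_ideal_def)
  then have "((\<lambda>t. f (\<gamma> t)) has_field_derivative 0) (at 0)"
    by (rule DERIV_cong_ev[OF refl _ refl, THEN iffD2]) (rule DERIV_const)
  then have "Df p v = 0"
    using Df[OF d\<gamma>] \<gamma>0 DERIV_unique by metis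
  moreover have "((\<lambda>t. f (fst p + smult t (fst v), snd p + smult t (snd v)))
      has_field_derivative Df p v) (at 0)"
    using Df[of "\<lambda>t. (fst p + smult t (fst v), snd p + smult t (snd v))" v]
    by (simp add: has_poly_derivative_line)
  ultimately show "((\<lambda>t. f (fst p + smult t (fst v), snd p + smult t (snd v)))
      has_field_derivative 0) (at 0)"
    by simp
qed

lemma curve_limit_in_zariski_closure:
  assumes p: "p \<in> An n" and \<gamma>0: "\<gamma> 0 = p" and \<gamma>S: "\<forall>\<^sub>F t in at 0. \<gamma> t \<in> S"
    and d\<gamma>: "has_poly_derivative (\<lambda>t. fst (\<gamma> t)) d1" "has_poly_derivative (\<lambda>t. snd (\<gamma> t)) d2"
  shows "p \<in> zariski_closure n S"
  unfolding zariski_closure_def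
proof (intro CollectI conjI p ballI)
  fix f assume f: "f \<in> vanishing_ideal n S"
  then obtain Df where Df: "\<And>\<gamma> v. has_poly_derivative (\<lambda>t. fst (\<gamma> t)) (fst v) \<Longrightarrow>
           has_poly_derivative (\<lambda>t. snd (\<gamma> t)) (snd v) \<Longrightarrow>
           ((\<lambda>t. f (\<gamma> t)) has_field_derivative Df (\<gamma> 0) v) (at 0)"
    using polyfun_chain_rule unfolding vanishing_ideal_def by blast
  have "((\<lambda>t. f (\<gamma> t)) has_field_derivative Df (\<gamma> 0) (d1, d2)) (at 0)"
    using Df[of \<gamma> "(d1, d2)"] d\<gamma> by simp
  then have "isCont (\<lambda>t. f (\<gamma> t)) 0"
    by (rule DERIV_isCont)
  then have "(\<lambda>t. f (\<gamma> t)) \<midarrow>0\<rightarrow> f p"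
    using \<gamma>0 by (simp add: isCont_def)
  moreover have "(\<lambda>t. f (\<gamma> t)) \<midarrow>0\<rightarrow> 0"
    using \<gamma>S f unfolding vanishing_ideal_def
    by (intro Lim_transform_eventually[OF tendsto_const]) (auto elim!: eventually_mono)
  ultimately show "f p = 0"
    by (rule LIM_unique)
qed

lemma polyfun_pow: "f \<in> polyfun n \<Longrightarrow> (\<lambda>x. f x ^ e) \<in> polyfun n"
proof (induction e)
  case 0 then show ?case using polyfun.const[of 1 n] by simp
next
  case (Suc e) then show ?case using polyfun.mult[of f n "\<lambda>x. f x ^ e"] by simp
qed

lemma polyfun_lc: "(\<lambda>x. coeff (fst x) n) \<in> polyfun n"
  by (rule polyfun.coordA) simp

text \<open>Regular functions on the open subset of A_n where the coordinate coeff a n is nonzero.\<close>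

definition lc_rational :: "nat \<Rightarrow> (complex poly \<times> complex poly \<Rightarrow> complex) \<Rightarrow> bool" where
  "lc_rational n h \<longleftrightarrow> (\<exists>e F. F \<in> polyfun n \<and>
     (\<forall>x\<in>An n. coeff (fst x) n \<noteq> 0 \<longrightarrow> coeff (fst x) n ^ e * h x = F x))"

lemma lc_rational_polyfun: "f \<in> polyfun n \<Longrightarrow> lc_rational n f"
  unfolding lc_rational_def by (rule exI[of _ 0]) auto

lemma lc_rational_const: "lc_rational n (\<lambda>x. a)"
  by (rule lc_rational_polyfun) (rule polyfun.const)

lemma lc_rational_add:
  assumes "lc_rational n f" "lc_rational n g"
  shows "lc_rational n (\<lambda>x. f x + g x)"
proof -
  obtain e1 F1 e2 F2 where F: "F1 \<in> polyfun n" "F2 \<in> polyfun n"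
    "\<forall>x\<in>An n. coeff (fst x) n \<noteq> 0 \<longrightarrow> coeff (fst x) n ^ e1 * f x = F1 x"
    "\<forall>x\<in>An n. coeff (fst x) n \<noteq> 0 \<longrightarrow> coeff (fst x) n ^ e2 * g x = F2 x"
    using assms unfolding lc_rational_def by blast
  have "(\<lambda>x. coeff (fst x) n ^ e2 * F1 x + coeff (fst x) n ^ e1 * F2 x) \<in> polyfun n"
    by (intro polyfun.add polyfun.mult polyfun_pow polyfun_lc F)
  moreover have "coeff (fst x) n ^ (e1 + e2) * (f x + g x)
      = coeff (fst x) n ^ e2 * F1 x + coeff (fst x) n ^ e1 * F2 x"
    if "x \<in> An n" "coeff (fst x) n \<noteq> 0" for x
  proof -
    have "coeff (fst x) n ^ e1 * f x = F1 x" "coeff (fst x) n ^ e2 * g x = F2 x"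
      using F(3,4) that by auto
    then show ?thesis
      by (auto simp: power_add algebra_simps simp flip: \<open>coeff (fst x) n ^ e1 * f x = F1 x\<close>
          \<open>coeff (fst x) n ^ e2 * g x = F2 x\<close>)
  qed
  ultimately show ?thesis
    unfolding lc_rational_def by blast
qed

lemma lc_rational_mult:
  assumes "lc_rational n f" "lc_rational n g"
  shows "lc_rational n (\<lambda>x. f x * g x)"
proof -
  obtain e1 F1 e2 F2 where F: "F1 \<in> polyfun n" "F2 \<in> polyfun n"
    "\<forall>x\<in>An n. coeff (fst x) n \<noteq> 0 \<longrightarrow> coeff (fst x) n ^ e1 * f x = F1 x"
    "\<forall>x\<in>An n. coeff (fst x) n \<noteq> 0 \<longrightarrow> coeff (fst x) n ^ e2 * g x = F2 x"
    using assms unfolding lc_rational_def by blast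
  have "coeff (fst x) n ^ (e1 + e2) * (f x * g x) = F1 x * F2 x"
    if "x \<in> An n" "coeff (fst x) n \<noteq> 0" for x
  proof -
    have "coeff (fst x) n ^ e1 * f x = F1 x" "coeff (fst x) n ^ e2 * g x = F2 x"
      using F(3,4) that by auto
    then show ?thesis
      by (auto simp: power_add algebra_simps simp flip: \<open>coeff (fst x) n ^ e1 * f x = F1 x\<close>
          \<open>coeff (fst x) n ^ e2 * g x = F2 x\<close>)
  qed
  then show ?thesis
    unfolding lc_rational_def using polyfun.mult[OF F(1,2)] by blast
qed

lemma lc_rational_cmult: "lc_rational n f \<Longrightarrow> lc_rational n (\<lambda>x. a * f x)"
  by (rule lc_rational_mult[OF lc_rational_const])

lemma lc_rational_diff: "lc_rational n f \<Longrightarrow> lc_rational n g \<Longrightarrow> lc_rational n (\<lambda>x. f x - g x)"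
  using lc_rational_add[of n f "\<lambda>x. (-1) * g x"] lc_rational_cmult[of n g "-1"] by simp

lemma lc_rational_inverse_lc: "lc_rational n (\<lambda>x. 1 / coeff (fst x) n)"
  unfolding lc_rational_def
  by (rule exI[of _ 1], rule exI[of _ "\<lambda>x. 1"]) (auto intro: polyfun.const)

lemma lc_rational_sum:
  "finite I \<Longrightarrow> (\<And>i. i \<in> I \<Longrightarrow> lc_rational n (f i)) \<Longrightarrow> lc_rational n (\<lambda>x. \<Sum>i\<in>I. f i x)"
  by (induction I rule: finite_induct) (auto intro: lc_rational_add lc_rational_const)

lemma lc_rational_coeff_fst: "lc_rational n (\<lambda>x. coeff (fst x) i)"
proof (cases "i \<le> n")
  case True
  then show ?thesis by (intro lc_rational_polyfun polyfun.coordA)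
next
  case False
  then show ?thesis unfolding lc_rational_def
    by (intro exI[of _ 0] exI[of _ "\<lambda>x. 0"]) (auto simp: An_def coeff_eq_0 intro: polyfun.const)
qed

lemma lc_rational_coeff_snd: "lc_rational n (\<lambda>x. coeff (snd x) i)"
proof (cases "i \<le> n")
  case True
  then show ?thesis by (intro lc_rational_polyfun polyfun.coordB)
next
  case False
  then show ?thesis unfolding lc_rational_def
    by (intro exI[of _ 0] exI[of _ "\<lambda>x. 0"]) (auto simp: An_def coeff_eq_0 intro: polyfun.const)
qed

definition lc_rational_poly :: "nat \<Rightarrow> (complex poly \<times> complex poly \<Rightarrow> complex poly) \<Rightarrow> bool" where
  "lc_rational_poly n P \<longleftrightarrow> (\<forall>j. lc_rational n (\<lambda>x. coeff (P x) j))"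

lemma lc_rational_coeff: "lc_rational_poly n P \<Longrightarrow> lc_rational n (\<lambda>x. coeff (P x) j)"
  unfolding lc_rational_poly_def by blast

lemma lc_rational_poly_fst: "lc_rational_poly n fst"
  unfolding lc_rational_poly_def by (simp add: lc_rational_coeff_fst)

lemma lc_rational_poly_snd: "lc_rational_poly n snd"
  unfolding lc_rational_poly_def by (simp add: lc_rational_coeff_snd)

lemma lc_rational_poly_const: "lc_rational_poly n (\<lambda>x. p)"
  unfolding lc_rational_poly_def by (simp add: lc_rational_const)

lemma lc_rational_poly_add:
  "lc_rational_poly n P \<Longrightarrow> lc_rational_poly n Q \<Longrightarrow> lc_rational_poly n (\<lambda>x. P x + Q x)"
  unfolding lc_rational_poly_def by (simp add: lc_rational_add)

lemma lc_rational_poly_diff: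
  "lc_rational_poly n P \<Longrightarrow> lc_rational_poly n Q \<Longrightarrow> lc_rational_poly n (\<lambda>x. P x - Q x)"
  unfolding lc_rational_poly_def by (simp add: lc_rational_diff)

lemma lc_rational_poly_mult:
  "lc_rational_poly n P \<Longrightarrow> lc_rational_poly n Q \<Longrightarrow> lc_rational_poly n (\<lambda>x. P x * Q x)"
  unfolding lc_rational_poly_def coeff_mult by (auto intro!: lc_rational_sum lc_rational_mult)

lemma lc_rational_poly_smult:
  "lc_rational n h \<Longrightarrow> lc_rational_poly n P \<Longrightarrow> lc_rational_poly n (\<lambda>x. smult (h x) (P x))"
  unfolding lc_rational_poly_def by (simp add: lc_rational_mult)

lemma lc_rational_poly_monom:
  assumes "lc_rational n h"
  shows "lc_rational_poly n (\<lambda>x. monom (h x) d)"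
  unfolding lc_rational_poly_def
proof
  fix j
  show "lc_rational n (\<lambda>x. coeff (monom (h x) d) j)"
    using assms by (cases "d = j") (simp_all add: lc_rational_const)
qed

lemma lc_rational_poly_power: "lc_rational_poly n P \<Longrightarrow> lc_rational_poly n (\<lambda>x. P x ^ i)"
  by (induction i) (auto intro: lc_rational_poly_mult lc_rational_poly_const)

lemma lc_rational_poly_sum:
  "finite I \<Longrightarrow> (\<And>i. i \<in> I \<Longrightarrow> lc_rational_poly n (P i)) \<Longrightarrow>
    lc_rational_poly n (\<lambda>x. \<Sum>i\<in>I. P i x)"
  unfolding lc_rational_poly_def coeff_sum by (auto intro!: lc_rational_sum)

lemma lc_rational_poly_prim:
  assumes "lc_rational_poly n P"
  shows "lc_rational_poly n (\<lambda>x. prim (P x))"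
  unfolding lc_rational_poly_def
proof
  fix j
  have "(\<lambda>x. coeff (prim (P x)) j) = (\<lambda>x. (if j = 0 then 0 else 1 / of_nat j) * coeff (P x) (j - 1))"
    by (simp add: coeff_prim)
  then show "lc_rational n (\<lambda>x. coeff (prim (P x)) j)"
    using lc_rational_cmult[OF lc_rational_coeff[OF assms]] by simp
qed

lemma lc_rational_poly_at_1:
  assumes "lc_rational_poly n P" "\<And>x. degree (P x) \<le> D"
  shows "lc_rational n (\<lambda>x. poly (P x) 1)"
proof -
  have "(\<lambda>x. poly (P x) 1) = (\<lambda>x. \<Sum>i\<le>D. coeff (P x) i)"
    using poly_eq_sum_bounded[OF assms(2)] by simp
  then show ?thesis
    using assms(1) by (auto intro!: lc_rational_sum lc_rational_coeff)
qed

lemma lc_rational_poly_pcompose: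
  assumes "lc_rational_poly n P" "lc_rational_poly n V" "\<And>x. degree (P x) \<le> D"
  shows "lc_rational_poly n (\<lambda>x. pcompose (P x) (V x))"
proof -
  have "(\<lambda>x. pcompose (P x) (V x)) = (\<lambda>x. \<Sum>i\<le>D. smult (coeff (P x) i) (V x ^ i))"
    using pcompose_eq_sum_powers[OF assms(3)] by blast
  then show ?thesis
    using assms(1,2) by (auto intro!: lc_rational_poly_sum lc_rational_poly_smult
        lc_rational_coeff lc_rational_poly_power)
qed

section \<open>Recovering a decomposition from the coefficients\<close>

text \<open>If A = G \<circ> V with deg G = m and V monic of degree k, then for 0 < s < k the coefficient of
  x^(mk-s) of A / lead_coeff A is that of V^m, which is m V_(k-s) plus a polynomial in
  V_(k-1), ..., V_(k-s+1). Hence the coefficients of V are determined from the top, one per step.\<close>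

fun inner_approx :: "nat \<Rightarrow> nat \<Rightarrow> complex poly \<Rightarrow> nat \<Rightarrow> complex poly" where
  "inner_approx k m A 0 = monom 1 k"
| "inner_approx k m A (Suc j) = inner_approx k m A j
     + monom ((coeff A (m * k - Suc j) / coeff A (m * k)
               - coeff (inner_approx k m A j ^ m) (m * k - Suc j)) / of_nat m) (k - Suc j)"

text \<open>Division of B by powers of V, top down: if B = H \<circ> V with deg H \<le> m and V monic of
  degree k, step s removes the term of H of degree m - s, so nothing remains after m + 1 steps.\<close>

fun compose_rem :: "nat \<Rightarrow> nat \<Rightarrow> complex poly \<Rightarrow> complex poly \<Rightarrow> nat \<Rightarrow> complex poly" where
  "compose_rem k m V B 0 = B"
| "compose_rem k m V B (Suc s) =
     compose_rem k m V B s - smult (coeff (compose_rem k m V B s) ((m - s) * k)) (V ^ (m - s))"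

definition compose_quot :: "nat \<Rightarrow> nat \<Rightarrow> complex poly \<Rightarrow> complex poly \<Rightarrow> nat \<Rightarrow> complex poly" where
  "compose_quot k m V B s =
     (\<Sum>s'<s. monom (coeff (compose_rem k m V B s') ((m - s') * k)) (m - s'))"

lemma compose_rem_eq: "compose_rem k m V B s = B - pcompose (compose_quot k m V B s) V"
  by (induction s) (auto simp: compose_quot_def pcompose_add pcompose_monom)

lemma degree_compose_quot: "degree (compose_quot k m V B s) \<le> m"
  unfolding compose_quot_def
  by (rule degree_sum_le) (auto intro: order.trans[OF degree_monom_le])

lemma compose_rem_0: "compose_rem k m V 0 s = 0"
  by (induction s) auto

lemma compose_quot_0: "compose_quot k m V 0 s = 0"
  by (simp add: compose_quot_def compose_rem_0)

lemma degree_inner_approx: "degree (inner_approx k m A j) \<le> k"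
  by (induction j) (auto intro!: degree_add_le order.trans[OF degree_monom_le])

lemma coeff_0_inner_approx: "j < k \<Longrightarrow> coeff (inner_approx k m A j) 0 = 0"
  by (induction j) auto

lemma lc_rational_poly_inner_approx:
  assumes "lc_rational_poly n A" "lc_rational n (\<lambda>x. 1 / coeff (A x) (m * k))"
  shows "lc_rational_poly n (\<lambda>x. inner_approx k m (A x) j)"
proof (induction j)
  case 0
  then show ?case by (simp add: lc_rational_poly_const)
next
  case (Suc j)
  have "lc_rational n (\<lambda>x. (coeff (A x) (m * k - Suc j) * (1 / coeff (A x) (m * k))
      - coeff (inner_approx k m (A x) j ^ m) (m * k - Suc j)) * (1 / of_nat m))"
    by (intro lc_rational_mult lc_rational_diff lc_rational_coeff assms lc_rational_poly_power Suc
        lc_rational_const)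
  then show ?case
    by (simp only: inner_approx.simps) (intro lc_rational_poly_add Suc lc_rational_poly_monom, simp)
qed

lemma lc_rational_poly_compose_rem:
  assumes "lc_rational_poly n V" "lc_rational_poly n B"
  shows "lc_rational_poly n (\<lambda>x. compose_rem k m (V x) (B x) s)"
  by (induction s)
    (auto intro!: lc_rational_poly_diff lc_rational_poly_smult lc_rational_coeff lc_rational_poly_power assms)

lemma lc_rational_poly_compose_quot:
  assumes "lc_rational_poly n V" "lc_rational_poly n B"
  shows "lc_rational_poly n (\<lambda>x. compose_quot k m (V x) (B x) s)"
  unfolding compose_quot_def
  by (auto intro!: lc_rational_poly_sum lc_rational_poly_monom lc_rational_coeff
      lc_rational_poly_compose_rem assms)

lemma compose_rem_pcompose:
  assumes "degree V = k" "coeff V k = 1" "1 \<le> k" "degree H \<le> m"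
  shows "compose_rem k m V (pcompose H V) (Suc m) = 0"
proof -
  have "compose_rem k m V (pcompose H V) s = pcompose (\<Sum>i<Suc m - s. monom (coeff H i) i) V"
    if "s \<le> Suc m" for s
    using that
  proof (induction s)
    case 0
    then show ?case using poly_as_sum_of_monoms'[OF assms(4)] by (simp add: lessThan_Suc_atMost)
  next
    case (Suc s)
    then have sm: "s \<le> m" by simp
    define T' where "T' = (\<Sum>i<m - s. monom (coeff H i) i)"
    have sp: "Suc m - s = Suc (m - s)" using sm by simp
    have T: "(\<Sum>i<Suc m - s. monom (coeff H i) i) = monom (coeff H (m - s)) (m - s) + T'"
      unfolding sp T'_def by (simp add: add.commute)
    have pc: "pcompose (\<Sum>i<Suc m - s. monom (coeff H i) i) V
        = smult (coeff H (m - s)) (V ^ (m - s)) + pcompose T' V"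
      unfolding T by (simp add: pcompose_add pcompose_monom)
    have "V \<noteq> 0" using assms(2) by auto
    then have degV: "degree (V ^ (m - s)) = (m - s) * k" by (simp add: degree_power_eq assms(1))
    have lc: "coeff (V ^ (m - s)) ((m - s) * k) = 1"
      using lead_coeff_power[of V "m - s"] degV assms(1,2) by simp
    have c0: "coeff (pcompose T' V) ((m - s) * k) = 0"
    proof (cases "m - s = 0")
      case True then show ?thesis by (simp add: T'_def)
    next
      case False
      have "degree T' \<le> m - s - 1" unfolding T'_def
        by (rule degree_sum_le) (auto intro: order.trans[OF degree_monom_le])
      then have "degree (pcompose T' V) \<le> (m - s - 1) * k"
        using degree_pcompose[of T' V] assms(1) by (simp add: mult_le_mono1)
      moreover have "(m - s - 1) * k < (m - s) * k" using False assms(3) by simp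
      ultimately show ?thesis by (intro coeff_eq_0) (meson le_less_trans)
    qed
    have "compose_rem k m V (pcompose H V) (Suc s) = pcompose T' V"
      using Suc.IH sm by (simp add: pc coeff_add lc c0)
    moreover have "Suc m - Suc s = m - s" by simp
    ultimately show ?case by (simp add: T'_def)
  qed
  from this[of "Suc m"] show ?thesis by simp
qed

lemma add_zero_or_degree_le:
  fixes X Y :: "complex poly"
  assumes "X = 0 \<or> degree X + c \<le> B" "Y = 0 \<or> degree Y + c \<le> B"
  shows "X + Y = 0 \<or> degree (X + Y) + c \<le> B"
proof (cases "X = 0")
  case True then show ?thesis using assms(2) by simp
next
  case False
  show ?thesis
  proof (cases "Y = 0")
    case True then show ?thesis using assms(1) by simp
  next
    case False
    then have "degree X + c \<le> B" "degree Y + c \<le> B" using assms \<open>X \<noteq> 0\<close> by auto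
    moreover have "degree (X + Y) \<le> max (degree X) (degree Y)" by (rule degree_add_le_max)
    ultimately show ?thesis by linarith
  qed
qed

lemma binomial_remainder_degree:
  fixes T r :: "complex poly"
  assumes "degree T \<le> k" "degree r \<le> d" "d \<le> k"
  shows "(T + r) ^ m - T ^ m - of_nat m * (T ^ (m - 1) * r) = 0 \<or>
     degree ((T + r) ^ m - T ^ m - of_nat m * (T ^ (m - 1) * r)) + 2 * (k - d) \<le> m * k"
proof (induction m)
  case 0 then show ?case by simp
next
  case (Suc m)
  define E where "E = (T + r) ^ m - T ^ m - of_nat m * (T ^ (m - 1) * r)"
  have id: "(T + r) ^ Suc m - T ^ Suc m - of_nat (Suc m) * (T ^ (Suc m - 1) * r)
      = (T + r) * E + of_nat m * (T ^ (m - 1) * r ^ 2)"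
  proof (cases m)
    case 0 then show ?thesis by (simp add: E_def)
  next
    case (Suc m')
    then show ?thesis by (simp add: E_def algebra_simps power2_eq_square)
  qed
  have d1: "(T + r) * E = 0 \<or> degree ((T + r) * E) + 2 * (k - d) \<le> Suc m * k"
  proof (cases "E = 0")
    case False
    then have "degree E + 2 * (k - d) \<le> m * k" using Suc.IH E_def by simp
    moreover have "degree ((T + r) * E) \<le> degree (T + r) + degree E" by (rule degree_mult_le)
    moreover have "degree (T + r) \<le> k" using assms by (meson degree_add_le le_trans)
    ultimately show ?thesis by simp
  qed simp
  have d2: "degree (of_nat m * (T ^ (m - 1) * r ^ 2)) + 2 * (k - d) \<le> Suc m * k \<or> m = 0"
  proof (cases "m = 0")
    case False
    have "degree (of_nat m * (T ^ (m - 1) * r ^ 2)) \<le> degree (T ^ (m - 1)) + degree (r ^ 2)"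
      by (simp add: of_nat_poly degree_mult_le)
    also have "\<dots> \<le> (m - 1) * k + 2 * d"
      using assms by (intro add_mono) (auto intro: order.trans[OF degree_power_le] mult_le_mono)
    finally show ?thesis using False assms(3) by (cases m) (auto simp: algebra_simps)
  qed simp
  have d2': "of_nat m * (T ^ (m - 1) * r ^ 2) = 0
      \<or> degree (of_nat m * (T ^ (m - 1) * r ^ 2)) + 2 * (k - d) \<le> Suc m * k"
    using d2 by auto
  show ?case unfolding id by (rule add_zero_or_degree_le[OF d1 d2'])
qed

lemma coeff_power_add_lower:
  fixes T r :: "complex poly"
  assumes T: "degree T = k" "coeff T k = 1" and r: "degree r \<le> k - s"
    and s: "1 \<le> s" "s \<le> k" and m: "1 \<le> m"
  shows "coeff ((T + r) ^ m) (m * k - s) = coeff (T ^ m) (m * k - s) + of_nat m * coeff r (k - s)"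
proof -
  have idx: "m * k - s = (m - 1) * k + (k - s)"
    using m s by (cases m) (auto simp: algebra_simps)
  define X where "X = (T + r) ^ m - T ^ m - of_nat m * (T ^ (m - 1) * r)"
  have "X = 0 \<or> degree X + 2 * (k - (k - s)) \<le> m * k"
    using binomial_remainder_degree[of T k r "k - s" m] T r by (simp add: X_def)
  then have "coeff X (m * k - s) = 0"
  proof
    assume "degree X + 2 * (k - (k - s)) \<le> m * k"
    then have "degree X < m * k - s"
      using s by linarith
    then show ?thesis by (rule coeff_eq_0)
  qed simp
  moreover have "coeff (T ^ (m - 1) * r) (m * k - s) = coeff r (k - s)"
  proof -
    have "T \<noteq> 0"
      using T by auto
    then have "degree (T ^ (m - 1)) = (m - 1) * k" "coeff (T ^ (m - 1)) ((m - 1) * k) = 1"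
      using T lead_coeff_power[of T "m - 1"] by (simp_all add: degree_power_eq)
    then show ?thesis
      unfolding idx by (subst coeff_mult_degree_bounds[OF _ r]) simp_all
  qed
  ultimately show ?thesis
    by (simp add: X_def of_nat_poly algebra_simps)
qed

lemma coeff_pcompose_upper:
  fixes G V :: "complex poly"
  assumes V: "degree V = k" "coeff V k = 1" and G: "degree G = m" "1 \<le> m" and s: "s < k"
  shows "coeff (pcompose G V) (m * k - s) = lead_coeff G * coeff (V ^ m) (m * k - s)"
proof -
  define g where "g = lead_coeff G"
  have split: "pcompose G V = smult g (V ^ m) + pcompose (G - monom g m) V"
    by (simp add: pcompose_diff pcompose_monom)
  have "degree (G - monom g m) \<le> m - 1"
    using G by (intro degree_le) (auto simp: coeff_eq_0 g_def)
  then have "degree (pcompose (G - monom g m) V) \<le> (m - 1) * k"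
    using degree_pcompose[of "G - monom g m" V] V by (simp add: mult_le_mono1)
  moreover have "(m - 1) * k < m * k - s"
    using s G(2) by (cases m) auto
  ultimately have "coeff (pcompose (G - monom g m) V) (m * k - s) = 0"
    using G by (auto intro: coeff_eq_0 simp: g_def)
  then show ?thesis
    by (simp add: split g_def)
qed

lemma inner_approx_eq:
  assumes k: "1 \<le> k" and m: "1 \<le> m" and V: "degree V = k" "coeff V k = 1"
    and G: "degree G = m" and j: "j < k"
  shows "inner_approx k m (pcompose G V) j
      = monom 1 k + (\<Sum>i\<in>{1..j}. monom (coeff V (k - i)) (k - i))"
  using j
proof (induction j)
  case 0
  then show ?case by simp
next
  case (Suc j)
  define T where "T = monom 1 k + (\<Sum>i\<in>{1..j}. monom (coeff V (k - i)) (k - i))"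
  define r where "r = V - T"
  define A where "A = pcompose G V"
  have coeff_T: "coeff T l = (if l = k then 1 else if l < k \<and> k - j \<le> l then coeff V l else 0)" for l
    using coeff_sum_monom_top[of j k "\<lambda>i. coeff V (k - i)" l] Suc.prems
    by (auto simp: T_def)
  have degT: "degree T = k" and lcT: "coeff T k = 1"
    using coeff_T by (auto intro!: degree_eq_of_coeff_nonzero degree_le)
  have degr: "degree r \<le> k - Suc j"
    using V coeff_T by (intro degree_le) (auto simp: r_def coeff_eq_0)
  have coeff_r: "coeff r (k - Suc j) = coeff V (k - Suc j)"
    using Suc.prems by (auto simp: r_def coeff_T)
  have Gnz: "lead_coeff G \<noteq> 0"
    using G m by auto
  have "V \<noteq> 0"
    using V by auto
  then have "coeff (V ^ m) (m * k) = 1"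
    using V lead_coeff_power[of V m] by (simp add: degree_power_eq)
  then have top: "coeff A (m * k) = lead_coeff G"
    using coeff_pcompose_upper[OF V G m, of 0] k by (simp add: A_def)
  have "coeff A (m * k - Suc j)
      = lead_coeff G * (coeff (T ^ m) (m * k - Suc j) + of_nat m * coeff V (k - Suc j))"
    using coeff_pcompose_upper[OF V G m Suc.prems] coeff_power_add_lower[OF degT lcT degr _ _ m]
      Suc.prems coeff_r by (simp add: A_def r_def)
  then have "(coeff A (m * k - Suc j) / coeff A (m * k) - coeff (T ^ m) (m * k - Suc j)) / of_nat m
      = coeff V (k - Suc j)"
    using Gnz m unfolding top by (simp add: field_simps)
  moreover have "inner_approx k m A j = T"
    using Suc by (simp add: T_def A_def)
  ultimately show ?case
    by (simp add: T_def A_def)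
qed

lemma inner_approx_recovers:
  assumes k: "1 \<le> k" and m: "1 \<le> m" and V: "degree V = k" "coeff V k = 1" "coeff V 0 = 0"
    and G: "degree G = m"
  shows "inner_approx k m (pcompose G V) (k - 1) = V"
proof (rule poly_eqI)
  fix l
  have "coeff (\<Sum>i\<in>{1..k - 1}. monom (coeff V (k - i)) (k - i)) l
      = (if l < k \<and> k - (k - 1) \<le> l then coeff V (k - (k - l)) else 0)"
    by (rule coeff_sum_monom_top) (use k in simp)
  then show "coeff (inner_approx k m (pcompose G V) (k - 1)) l = coeff V l"
    using inner_approx_eq[OF k m V(1,2) G, of "k - 1"] k V
    by (cases "l = 0") (auto simp: coeff_eq_0)
qed

definition decomposable :: "nat \<Rightarrow> nat \<Rightarrow> (complex poly \<times> complex poly) set" where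
  "decomposable n k = {(a, b) \<in> An n. \<exists>At Bt W.
      degree At = (n + 1) div k \<and> degree Bt = (n + 1) div k \<and> degree W = k \<and>
      poly W 0 = poly W 1 \<and> prim a = pcompose At W \<and> prim b = pcompose Bt W}"

lemma U_set_eq_closure: "U_set n k = zariski_closure n (decomposable n k)"
  unfolding U_set_def decomposable_def ..

lemma decomposable_subset_An: "decomposable n k \<subseteq> An n"
  unfolding decomposable_def by auto

lemma zariski_closure_subset_An: "zariski_closure n S \<subseteq> An n"
  unfolding zariski_closure_def by auto

lemma subset_zariski_closure: "S \<subseteq> An n \<Longrightarrow> S \<subseteq> zariski_closure n S"
  unfolding zariski_closure_def vanishing_ideal_def by auto

lemma vanishing_ideal_zariski_closure:
  "f \<in> vanishing_ideal n S \<Longrightarrow> f \<in> vanishing_ideal n (zariski_closure n S)"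
  unfolding zariski_closure_def vanishing_ideal_def by auto

lemma one_le_div_of_dvd:
  fixes n k :: nat
  assumes "1 < k" "k dvd n + 1"
  shows "1 \<le> (n + 1) div k"
proof -
  have "k \<le> n + 1"
    using dvd_imp_le[OF assms(2)] by simp
  then show ?thesis
    using assms div_greater_zero_iff[of "n + 1" k] by linarith
qed

lemma decomposable_normal_form:
  assumes "(a, b) \<in> decomposable n k" "1 \<le> k"
  obtains V G H where "degree V = k" "coeff V k = 1" "coeff V 0 = 0" "poly V 1 = 0"
    "degree G = (n + 1) div k" "degree H = (n + 1) div k"
    "prim a = pcompose G V" "prim b = pcompose H V"
proof -
  obtain At Bt W where h: "degree At = (n + 1) div k" "degree Bt = (n + 1) div k" "degree W = k"
      "poly W 0 = poly W 1" "prim a = pcompose At W" "prim b = pcompose Bt W"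
    using assms(1) unfolding decomposable_def by blast
  define L where "L = [:poly W 0, lead_coeff W:]"
  have "lead_coeff W \<noteq> 0"
    using h(3) assms(2) by auto
  then have degL: "degree (pcompose P L) = degree P" for P
    by (simp add: L_def degree_pcompose)
  have comp: "pcompose P W = pcompose (pcompose P L) (normalized_inner W)" for P
  proof -
    have "pcompose P W = pcompose P (pcompose L (normalized_inner W))"
      using normalized_inner(5)[OF h(3) assms(2)] by (simp add: L_def)
    then show ?thesis
      by (simp add: pcompose_assoc)
  qed
  show ?thesis
    by (rule that[of "normalized_inner W" "pcompose At L" "pcompose Bt L"])
      (use normalized_inner[OF h(3) assms(2)] h degL comp in simp_all)
qed

lemma lc_nonzero_on_decomposable:
  assumes "(a, b) \<in> decomposable n k" "1 < k" "k dvd n + 1"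
  shows "coeff a n \<noteq> 0"
proof -
  obtain V G where h: "degree V = k" "coeff V k = 1" "degree G = (n + 1) div k"
      "prim a = pcompose G V"
    using decomposable_normal_form[OF assms(1)] assms(2) by (metis less_imp_le)
  have "G \<noteq> 0"
    using h(3) one_le_div_of_dvd[OF assms(2,3)] by auto
  have "degree (prim a) = n + 1"
    using h assms by (simp add: degree_pcompose)
  moreover have "lead_coeff (prim a) = lead_coeff G"
    using h lead_coeff_comp[of V G] assms by simp
  ultimately have "coeff (prim a) (n + 1) \<noteq> 0"
    using \<open>G \<noteq> 0\<close> by simp
  then show ?thesis
    by (simp add: coeff_prim)
qed

section \<open>Vanishing to first order at points of the closure\<close>

lemma An_line:
  assumes "(a, b) \<in> An n" "(p, q) \<in> An n"
  shows "(a + smult t p, b + smult t q) \<in> An n"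
  using assms unfolding An_def
  by (auto intro: order.trans[OF degree_add_le] order.trans[OF degree_smult_le])

lemma lc_rational_along_line:
  assumes "lc_rational n h" "(a, b) \<in> An n" "(p, q) \<in> An n" "coeff a n \<noteq> 0"
  obtains e F where "F \<in> polyfun n"
    "\<forall>x\<in>An n. coeff (fst x) n \<noteq> 0 \<longrightarrow> coeff (fst x) n ^ e * h x = F x"
    "\<forall>\<^sub>F t in nhds 0. h (a + smult t p, b + smult t q)
        = F (a + smult t p, b + smult t q) / (coeff a n + t * coeff p n) ^ e"
proof -
  obtain e F where F: "F \<in> polyfun n"
      "\<forall>x\<in>An n. coeff (fst x) n \<noteq> 0 \<longrightarrow> coeff (fst x) n ^ e * h x = F x"
    using assms(1) unfolding lc_rational_def by blast
  have "\<forall>\<^sub>F t in nhds 0. h (a + smult t p, b + smult t q)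
      = F (a + smult t p, b + smult t q) / (coeff a n + t * coeff p n) ^ e"
    using nonzero_near_0[OF assms(4), of "coeff p n"]
  proof (rule eventually_mono)
    fix t assume t: "coeff a n + t * coeff p n \<noteq> 0"
    have "(a + smult t p, b + smult t q) \<in> An n"
      by (rule An_line[OF assms(2,3)])
    then have "(coeff a n + t * coeff p n) ^ e * h (a + smult t p, b + smult t q)
        = F (a + smult t p, b + smult t q)"
      using F(2) t by auto
    then show "h (a + smult t p, b + smult t q)
        = F (a + smult t p, b + smult t q) / (coeff a n + t * coeff p n) ^ e"
      using t by (simp add: field_simps)
  qed
  then show ?thesis
    using F that by blast
qed

lemma DERIV_divide_linear_power:
  fixes \<alpha> \<beta> :: complex
  assumes "(f has_field_derivative D) (at 0)" "\<alpha> \<noteq> 0"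
  shows "((\<lambda>t. f t / (\<alpha> + t * \<beta>) ^ e) has_field_derivative
           (D * \<alpha> ^ e - f 0 * (of_nat e * (\<beta> * \<alpha> ^ (e - 1)))) / (\<alpha> ^ e * \<alpha> ^ e)) (at 0)"
proof -
  have "((\<lambda>t. f t / (\<alpha> + t * \<beta>) ^ e) has_field_derivative
      (D * (\<alpha> + 0 * \<beta>) ^ e - f 0 * (of_nat e * (\<beta> * (\<alpha> + 0 * \<beta>) ^ (e - 1))))
        / ((\<alpha> + 0 * \<beta>) ^ e * (\<alpha> + 0 * \<beta>) ^ e)) (at 0)"
    by (rule DERIV_divide[OF assms(1)]) (use assms(2) in \<open>auto intro!: derivative_eq_intros\<close>)
  then show ?thesis by simp
qed

lemma lc_rational_differentiable_along_line:
  assumes "lc_rational n h" "(a, b) \<in> An n" "(p, q) \<in> An n" "coeff a n \<noteq> 0"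
  shows "\<exists>D. ((\<lambda>t. h (a + smult t p, b + smult t q)) has_field_derivative D) (at 0)"
proof -
  obtain e F where F: "F \<in> polyfun n"
    "\<forall>\<^sub>F t in nhds 0. h (a + smult t p, b + smult t q)
        = F (a + smult t p, b + smult t q) / (coeff a n + t * coeff p n) ^ e"
    using lc_rational_along_line[OF assms] by blast
  obtain DF where "((\<lambda>t. F (a + smult t p, b + smult t q)) has_field_derivative DF) (at 0)"
    using polyfun_differentiable_along_line[OF F(1)] by blast
  from DERIV_divide_linear_power[OF this assms(4)] show ?thesis
    using DERIV_cong_ev[OF refl F(2) refl] by blast
qed

lemma lc_rational_tangent_vanishing:
  assumes h: "lc_rational n h" "\<forall>x\<in>S. h x = 0"
    and S: "\<forall>x\<in>S. coeff (fst x) n \<noteq> 0" "S \<subseteq> An n"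
    and ab: "(a, b) \<in> zariski_closure n S" "coeff a n \<noteq> 0"
    and pq: "(p, q) \<in> zariski_tangent n (zariski_closure n S) (a, b)"
  shows "h (a, b) = 0" "((\<lambda>t. h (a + smult t p, b + smult t q)) has_field_derivative 0) (at 0)"
proof -
  have aA: "(a, b) \<in> An n"
    using ab(1) zariski_closure_subset_An by blast
  have pA: "(p, q) \<in> An n"
    using pq unfolding zariski_tangent_def by auto
  obtain e F where F: "F \<in> polyfun n"
    "\<forall>x\<in>An n. coeff (fst x) n \<noteq> 0 \<longrightarrow> coeff (fst x) n ^ e * h x = F x"
    "\<forall>\<^sub>F t in nhds 0. h (a + smult t p, b + smult t q)
        = F (a + smult t p, b + smult t q) / (coeff a n + t * coeff p n) ^ e"
    using lc_rational_along_line[OF h(1) aA pA ab(2)] by blast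
  have FS: "F \<in> vanishing_ideal n S"
    unfolding vanishing_ideal_def using F(1,2) h(2) S by force
  then have F0: "F (a, b) = 0"
    using ab(1) unfolding zariski_closure_def by blast
  then show "h (a, b) = 0"
    using F(2) aA ab(2) by force
  have "((\<lambda>t. F (a + smult t p, b + smult t q)) has_field_derivative 0) (at 0)"
    using pq vanishing_ideal_zariski_closure[OF FS] unfolding zariski_tangent_def by auto
  from DERIV_divide_linear_power[OF this ab(2), of "coeff p n" e]
  have "((\<lambda>t. F (a + smult t p, b + smult t q) / (coeff a n + t * coeff p n) ^ e)
      has_field_derivative 0) (at 0)"
    using F0 by simp
  then show "((\<lambda>t. h (a + smult t p, b + smult t q)) has_field_derivative 0) (at 0)"
    using DERIV_cong_ev[OF refl F(3) refl] by blast
qed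

lemma lc_rational_poly_differentiable_along_line:
  assumes "lc_rational_poly n P" "\<And>x. degree (P x) \<le> D"
    and "(a, b) \<in> An n" "(p, q) \<in> An n" "coeff a n \<noteq> 0"
  obtains d where "has_poly_derivative (\<lambda>t. P (a + smult t p, b + smult t q)) d"
  by (rule has_poly_derivative_exists[OF assms(2)])
    (rule lc_rational_differentiable_along_line[OF lc_rational_coeff[OF assms(1)] assms(3-5)])

lemma lc_rational_poly_tangent_vanishing:
  assumes "lc_rational_poly n P" "\<forall>x\<in>S. P x = 0"
    and "\<forall>x\<in>S. coeff (fst x) n \<noteq> 0" "S \<subseteq> An n"
    and "(a, b) \<in> zariski_closure n S" "coeff a n \<noteq> 0"
    and "(p, q) \<in> zariski_tangent n (zariski_closure n S) (a, b)"
  shows "P (a, b) = 0" "has_poly_derivative (\<lambda>t. P (a + smult t p, b + smult t q)) 0"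
proof -
  have "\<forall>x\<in>S. coeff (P x) j = 0" for j
    using assms(2) by simp
  note coeffwise = lc_rational_tangent_vanishing[OF lc_rational_coeff[OF assms(1)] this assms(3-7)]
  show "P (a, b) = 0"
    using coeffwise(1) by (intro poly_eqI) simp
  show "has_poly_derivative (\<lambda>t. P (a + smult t p, b + smult t q)) 0"
    unfolding has_poly_derivative_def using coeffwise(2) by simp
qed

section \<open>Tangent vectors of the closure\<close>

definition inner_map :: "nat \<Rightarrow> nat \<Rightarrow> complex poly \<times> complex poly \<Rightarrow> complex poly" where
  "inner_map n k x = inner_approx k ((n + 1) div k) (prim (fst x)) (k - 1)"

definition monic_prim :: "nat \<Rightarrow> complex poly \<times> complex poly \<Rightarrow> complex poly" where
  "monic_prim n x = smult (1 / coeff (prim (fst x)) (n + 1)) (prim (fst x))"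

definition outer_fst :: "nat \<Rightarrow> nat \<Rightarrow> complex poly \<times> complex poly \<Rightarrow> complex poly" where
  "outer_fst n k x =
     compose_quot k ((n + 1) div k) (inner_map n k x) (monic_prim n x) (Suc ((n + 1) div k))"

definition outer_snd :: "nat \<Rightarrow> nat \<Rightarrow> complex poly \<times> complex poly \<Rightarrow> complex poly" where
  "outer_snd n k x =
     compose_quot k ((n + 1) div k) (inner_map n k x) (prim (snd x)) (Suc ((n + 1) div k))"

lemma degree_inner_map: "degree (inner_map n k x) \<le> k"
  unfolding inner_map_def by (rule degree_inner_approx)

lemma degree_outer_fst: "degree (outer_fst n k x) \<le> (n + 1) div k"
  unfolding outer_fst_def by (rule degree_compose_quot)

lemma degree_outer_snd: "degree (outer_snd n k x) \<le> (n + 1) div k"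
  unfolding outer_snd_def by (rule degree_compose_quot)

lemma lc_rational_poly_decomposition_maps:
  assumes "k dvd n + 1"
  shows "lc_rational_poly n (inner_map n k)" "lc_rational_poly n (monic_prim n)"
    "lc_rational_poly n (outer_fst n k)" "lc_rational_poly n (outer_snd n k)"
proof -
  have eq: "(\<lambda>x. 1 / coeff (prim (fst x)) (n + 1)) = (\<lambda>x. of_nat (n + 1) * (1 / coeff (fst x) n))"
    by (simp add: coeff_prim del: of_nat_Suc)
  have inv: "lc_rational n (\<lambda>x. 1 / coeff (prim (fst x)) (n + 1))"
    unfolding eq by (rule lc_rational_cmult[OF lc_rational_inverse_lc])
  have mk: "(n + 1) div k * k = n + 1"
    using assms by simp
  show inner: "lc_rational_poly n (inner_map n k)"
    unfolding inner_map_def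
    by (rule lc_rational_poly_inner_approx[OF lc_rational_poly_prim[OF lc_rational_poly_fst]]) (use inv mk in simp)
  show monic: "lc_rational_poly n (monic_prim n)"
    unfolding monic_prim_def by (rule lc_rational_poly_smult[OF inv lc_rational_poly_prim[OF lc_rational_poly_fst]])
  show "lc_rational_poly n (outer_fst n k)"
    unfolding outer_fst_def by (rule lc_rational_poly_compose_quot[OF inner monic])
  show "lc_rational_poly n (outer_snd n k)"
    unfolding outer_snd_def by (rule lc_rational_poly_compose_quot[OF inner lc_rational_poly_prim[OF lc_rational_poly_snd]])
qed

lemma decomposable_identities:
  assumes x: "x \<in> decomposable n k" and k: "1 < k" "k dvd n + 1"
  shows "monic_prim n x = pcompose (outer_fst n k x) (inner_map n k x)"
    "prim (snd x) = pcompose (outer_snd n k x) (inner_map n k x)"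
    "poly (inner_map n k x) 1 = 0"
proof -
  define m where "m = (n + 1) div k"
  have k1: "1 \<le> k" and m1: "1 \<le> m"
    using k one_le_div_of_dvd[OF k] by (simp_all add: m_def)
  obtain a b where ab: "x = (a, b)"
    by (cases x)
  obtain V G H where h: "degree V = k" "coeff V k = 1" "coeff V 0 = 0" "poly V 1 = 0"
      "degree G = m" "degree H = m" "prim a = pcompose G V" "prim b = pcompose H V"
    using decomposable_normal_form[OF x[unfolded ab] k1] unfolding m_def by blast
  have V: "inner_map n k x = V"
    using inner_approx_recovers[OF k1 m1 h(1-3,5)] h(7) by (simp add: inner_map_def ab m_def)
  have "monic_prim n x = pcompose (smult (1 / coeff (prim a) (n + 1)) G) V"
    using h(7) by (simp add: monic_prim_def ab pcompose_smult)
  then have "compose_rem k m (inner_map n k x) (monic_prim n x) (Suc m) = 0"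
    using compose_rem_pcompose[OF h(1,2) k1] h(5) V by simp
  then show "monic_prim n x = pcompose (outer_fst n k x) (inner_map n k x)"
    by (simp add: compose_rem_eq outer_fst_def m_def)
  have "compose_rem k m (inner_map n k x) (prim (snd x)) (Suc m) = 0"
    using compose_rem_pcompose[OF h(1,2) k1, of H m] h(6,8) V by (simp add: ab)
  then show "prim (snd x) = pcompose (outer_snd n k x) (inner_map n k x)"
    by (simp add: compose_rem_eq outer_snd_def m_def)
  show "poly (inner_map n k x) 1 = 0"
    using V h(4) by simp
qed

lemma tangent_first_order_identities:
  assumes k: "1 < k" "k dvd n + 1"
    and ab: "(a, b) \<in> U_set n k" "coeff a n \<noteq> 0"
    and pq: "(p, q) \<in> zariski_tangent n (U_set n k) (a, b)"
  defines "L \<equiv> \<lambda>t. (a + smult t p, b + smult t q)"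
  shows "monic_prim n (a, b) = pcompose (outer_fst n k (a, b)) (inner_map n k (a, b))"
    "has_poly_derivative
       (\<lambda>t. monic_prim n (L t) - pcompose (outer_fst n k (L t)) (inner_map n k (L t))) 0"
    "has_poly_derivative
       (\<lambda>t. prim (snd (L t)) - pcompose (outer_snd n k (L t)) (inner_map n k (L t))) 0"
    "((\<lambda>t. poly (inner_map n k (L t)) 1) has_field_derivative 0) (at 0)"
proof -
  define S where "S = decomposable n k"
  have S: "\<forall>x\<in>S. coeff (fst x) n \<noteq> 0" "S \<subseteq> An n"
    using lc_nonzero_on_decomposable[OF _ k] decomposable_subset_An by (auto simp: S_def)
  note closure = ab(1)[unfolded U_set_eq_closure S_def[symmetric]]
  note tangent = pq[unfolded U_set_eq_closure S_def[symmetric]]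
  note maps = lc_rational_poly_decomposition_maps[OF k(2)]
  note identities = decomposable_identities[OF _ k, folded S_def]
  have "lc_rational_poly n (\<lambda>x. monic_prim n x - pcompose (outer_fst n k x) (inner_map n k x))"
    by (rule lc_rational_poly_diff[OF maps(2) lc_rational_poly_pcompose[OF maps(3,1) degree_outer_fst]])
  note fst_vanishing = lc_rational_poly_tangent_vanishing[OF this _ S closure ab(2) tangent]
  have "lc_rational_poly n (\<lambda>x. prim (snd x) - pcompose (outer_snd n k x) (inner_map n k x))"
    by (rule lc_rational_poly_diff[OF lc_rational_poly_prim[OF lc_rational_poly_snd]
          lc_rational_poly_pcompose[OF maps(4,1) degree_outer_snd]])
  note snd_vanishing = lc_rational_poly_tangent_vanishing[OF this _ S closure ab(2) tangent]
  have "lc_rational n (\<lambda>x. poly (inner_map n k x) 1)"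
    by (rule lc_rational_poly_at_1[OF maps(1) degree_inner_map])
  note boundary_vanishing = lc_rational_tangent_vanishing[OF this _ S closure ab(2) tangent]
  show "monic_prim n (a, b) = pcompose (outer_fst n k (a, b)) (inner_map n k (a, b))"
    using fst_vanishing(1) identities(1) by simp
  show "has_poly_derivative
       (\<lambda>t. monic_prim n (L t) - pcompose (outer_fst n k (L t)) (inner_map n k (L t))) 0"
    using fst_vanishing(2) identities(1) by (simp add: L_def)
  show "has_poly_derivative
       (\<lambda>t. prim (snd (L t)) - pcompose (outer_snd n k (L t)) (inner_map n k (L t))) 0"
    using snd_vanishing(2) identities(2) by (simp add: L_def)
  show "((\<lambda>t. poly (inner_map n k (L t)) 1) has_field_derivative 0) (at 0)"
    using boundary_vanishing(2) identities(3) by (simp add: L_def)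
qed

lemma tangent_variation:
  assumes k: "1 < k" "k dvd n + 1"
    and a: "(a, 0) \<in> U_set n k" "coeff a n \<noteq> 0"
    and pq: "(p1, q1) \<in> zariski_tangent n (U_set n k) (a, 0)"
  obtains dG dH dV where "degree dG \<le> (n + 1) div k" "degree dH \<le> (n + 1) div k"
    "degree dV \<le> k" "poly dV 0 = 0" "poly dV 1 = 0"
    "smult (- coeff (prim p1) (n + 1) / coeff (prim a) (n + 1) ^ 2) (prim a)
       + smult (1 / coeff (prim a) (n + 1)) (prim p1)
     = pcompose dG (inner_map n k (a, 0))
       + pcompose (pderiv (outer_fst n k (a, 0))) (inner_map n k (a, 0)) * dV"
    "prim q1 = pcompose dH (inner_map n k (a, 0))"
proof -
  define L where "L t = (a + smult t p1, 0 + smult t q1)" for t :: complex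
  define c where "c = coeff (prim a) (n + 1)"
  define c1 where "c1 = coeff (prim p1) (n + 1)"
  define V0 where "V0 = inner_map n k (a, 0)"
  note identities = tangent_first_order_identities[OF k a pq, folded L_def]
  note maps = lc_rational_poly_decomposition_maps[OF k(2)]
  have aA: "(a, 0) \<in> An n" and pA: "(p1, q1) \<in> An n"
    using a(1) pq zariski_closure_subset_An
    by (auto simp: U_set_eq_closure zariski_tangent_def)
  obtain dV where dV: "has_poly_derivative (\<lambda>t. inner_map n k (L t)) dV"
    using lc_rational_poly_differentiable_along_line[OF maps(1) degree_inner_map aA pA a(2)]
    unfolding L_def by blast
  obtain dG where dG: "has_poly_derivative (\<lambda>t. outer_fst n k (L t)) dG"
    using lc_rational_poly_differentiable_along_line[OF maps(3) degree_outer_fst aA pA a(2)]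
    unfolding L_def by blast
  obtain dH where dH: "has_poly_derivative (\<lambda>t. outer_snd n k (L t)) dH"
    using lc_rational_poly_differentiable_along_line[OF maps(4) degree_outer_snd aA pA a(2)]
    unfolding L_def by blast
  have L0: "L 0 = (a, 0)"
    by (simp add: L_def)
  have c: "c \<noteq> 0"
    using a(2) by (simp add: c_def coeff_prim del: of_nat_Suc)
  have "((\<lambda>t. 1 / (c + t * c1)) has_field_derivative
      (0 * (c + 0 * c1) - 1 * c1) / ((c + 0 * c1) * (c + 0 * c1))) (at 0)"
    by (rule DERIV_divide) (use c in \<open>auto intro!: derivative_eq_intros\<close>)
  then have inv_deriv: "((\<lambda>t. 1 / (c + t * c1)) has_field_derivative - c1 / c ^ 2) (at 0)"
    by (simp add: power2_eq_square)
  have "monic_prim n (L t) = smult (1 / (c + t * c1)) (prim a + smult t (prim p1))" for t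
    by (simp add: monic_prim_def L_def prim_add prim_smult c_def c1_def)
  then have "has_poly_derivative (\<lambda>t. monic_prim n (L t))
      (smult (- c1 / c ^ 2) (prim a) + smult (1 / c) (prim p1))"
    using has_poly_derivative_smult[OF inv_deriv has_poly_derivative_line, of "prim a" "prim p1"]
    by simp
  note fst_deriv = has_poly_derivative_diff[OF this has_poly_derivative_pcompose[OF dG dV degree_outer_fst]]
  have fst_eq: "smult (- c1 / c ^ 2) (prim a) + smult (1 / c) (prim p1)
      = pcompose dG V0 + pcompose (pderiv (outer_fst n k (a, 0))) V0 * dV"
    using has_poly_derivative_unique[OF fst_deriv identities(2)] by (simp add: L0 V0_def)
  have "prim (snd (L t)) = 0 + smult t (prim q1)" for t
    by (simp add: L_def prim_smult)
  then have "has_poly_derivative (\<lambda>t. prim (snd (L t))) (prim q1)"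
    using has_poly_derivative_line[of 0 "prim q1"] by simp
  note snd_deriv = has_poly_derivative_diff[OF this has_poly_derivative_pcompose[OF dH dV degree_outer_snd]]
  have snd_eq: "prim q1 = pcompose dH V0"
    using has_poly_derivative_unique[OF snd_deriv identities(3)]
    by (simp add: L0 V0_def outer_snd_def compose_quot_0)
  show ?thesis
  proof (rule that)
    show "degree dG \<le> (n + 1) div k"
      by (rule degree_poly_derivative_le[OF dG degree_outer_fst])
    show "degree dH \<le> (n + 1) div k"
      by (rule degree_poly_derivative_le[OF dH degree_outer_snd])
    show "degree dV \<le> k"
      by (rule degree_poly_derivative_le[OF dV degree_inner_map])
    have "(\<lambda>t. coeff (inner_map n k (L t)) 0) = (\<lambda>t. 0)"
      using k by (simp add: inner_map_def coeff_0_inner_approx)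
    then have "coeff dV 0 = 0"
      using has_poly_derivative_coeff[OF dV, of 0] DERIV_unique DERIV_const by metis
    then show "poly dV 0 = 0"
      by (simp add: poly_0_coeff_0)
    show "poly dV 1 = 0"
      using has_poly_derivative_poly[OF dV degree_inner_map] identities(4) DERIV_unique by blast
    show "prim q1 = pcompose dH (inner_map n k (a, 0))"
      using snd_eq by (simp only: V0_def)
  qed (use fst_eq in \<open>simp only: c_def c1_def V0_def\<close>)
qed

lemma pcompose_affine_inverse:
  fixes V W Y :: "complex poly"
  assumes "lw \<noteq> 0" "W = pcompose [:mu, lw:] V"
  shows "pcompose Y V = pcompose (pcompose Y [:- mu / lw, 1 / lw:]) W"
proof -
  have "pcompose [:- mu / lw, 1 / lw:] [:mu, lw:] = [:0, 1:]"
    using assms(1) by (simp add: pcompose_pCons field_simps)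
  then have "pcompose [:- mu / lw, 1 / lw:] W = pcompose [:0, 1:] V"
    by (simp only: assms(2) pcompose_assoc)
  then have "pcompose [:- mu / lw, 1 / lw:] W = V"
    by (simp add: pcompose_pCons)
  then have "pcompose Y V = pcompose Y (pcompose [:- mu / lw, 1 / lw:] W)"
    by simp
  then show ?thesis
    by (simp only: pcompose_assoc)
qed

lemma pcompose_variation_normal_form:
  fixes W V At G0 dG dV P :: "complex poly"
  assumes lw: "lw \<noteq> 0" and W: "W = pcompose [:mu, lw:] V" "degree V > 0" and c: "c \<noteq> 0"
    and G0: "smult (1 / c) (pcompose At W) = pcompose G0 V"
    and var: "smult d (pcompose At W) + smult (1 / c) P
      = pcompose dG V + pcompose (pderiv G0) V * dV"
  shows "P = pcompose (smult c (pcompose dG [:- mu / lw, 1 / lw:]) - smult (c * d) At) W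
           + smult lw dV * pcompose (pderiv At) W"
proof -
  have At_V: "pcompose At W = pcompose (pcompose At [:mu, lw:]) V"
    by (simp add: W pcompose_assoc)
  have "pcompose (smult c G0) V = pcompose At W"
    using arg_cong[OF G0, of "smult c"] c by (simp add: pcompose_smult)
  then have "pcompose (pcompose At [:mu, lw:]) V = pcompose (smult c G0) V"
    by (simp add: At_V)
  then have "pcompose At [:mu, lw:] = smult c G0"
    using W(2) by (rule pcompose_cancel_right)
  moreover have "pderiv (pcompose At [:mu, lw:]) = smult lw (pcompose (pderiv At) [:mu, lw:])"
    by (simp add: pderiv_pcompose pderiv_pCons)
  ultimately have dG0: "smult c (pderiv G0) = smult lw (pcompose (pderiv At) [:mu, lw:])"
    by (simp add: pderiv_smult)
  have "pderiv G0 = smult (lw / c) (pcompose (pderiv At) [:mu, lw:])"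
    using arg_cong[OF dG0, of "smult (1 / c)"] c by simp
  then have G0': "pcompose (pderiv G0) V = smult (lw / c) (pcompose (pderiv At) W)"
    by (simp add: pcompose_smult W pcompose_assoc)
  have "P = smult c (pcompose dG V + pcompose (pderiv G0) V * dV - smult d (pcompose At W))"
    using arg_cong[OF var, of "\<lambda>X. smult c (X - smult d (pcompose At W))"] c by simp
  also have "\<dots> = pcompose (smult c (pcompose dG [:- mu / lw, 1 / lw:]) - smult (c * d) At) W
      + smult lw dV * pcompose (pderiv At) W"
    unfolding G0' pcompose_affine_inverse[OF lw W(1), of dG] using c
    by (simp add: pcompose_diff pcompose_smult algebra_simps smult_diff_right smult_add_right)
  finally show ?thesis .
qed

lemma zariski_tangent_subset:
  assumes k: "1 < k" "k dvd n + 1" and a: "(a, 0) \<in> U_set n k" "coeff a n \<noteq> 0"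
    and W: "degree W = k" "poly W 0 = poly W 1"
    and At: "degree At = (n + 1) div k" "prim a = pcompose At W"
    and pq: "(p1, q1) \<in> zariski_tangent n (U_set n k) (a, 0)"
  shows "\<exists>Pt Qt R. degree Pt \<le> (n + 1) div k \<and> degree Qt \<le> (n + 1) div k \<and>
           degree R \<le> k \<and> poly R 0 = poly R 1 \<and>
           prim p1 = pcompose Pt W + R * pcompose (pderiv At) W \<and> prim q1 = pcompose Qt W"
proof -
  define m where "m = (n + 1) div k"
  define c where "c = coeff (prim a) (n + 1)"
  define d where "d = - coeff (prim p1) (n + 1) / c ^ 2"
  define mu where "mu = poly W 0"
  define lw where "lw = lead_coeff W"
  define Inv where "Inv = [:- mu / lw, 1 / lw:]"
  define V0 where "V0 = inner_map n k (a, 0)"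
  define G0 where "G0 = outer_fst n k (a, 0)"
  have k1: "1 \<le> k" and m1: "1 \<le> m"
    using k one_le_div_of_dvd[OF k] by (simp_all add: m_def)
  have lw: "lw \<noteq> 0"
    using W(1) k by (auto simp: lw_def)
  have c: "c \<noteq> 0"
    using a(2) by (simp add: c_def coeff_prim del: of_nat_Suc)
  obtain dG dH dV where var: "degree dG \<le> m" "degree dH \<le> m" "degree dV \<le> k"
      "poly dV 0 = 0" "poly dV 1 = 0"
      "smult d (prim a) + smult (1 / c) (prim p1) = pcompose dG V0 + pcompose (pderiv G0) V0 * dV"
      "prim q1 = pcompose dH V0"
    using tangent_variation[OF k a pq] unfolding c_def d_def V0_def G0_def m_def by blast
  note N = normalized_inner[OF W(1) k1]
  have "prim a = pcompose At (pcompose [:mu, lw:] (normalized_inner W))"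
    using At(2) N(5) by (simp add: mu_def lw_def)
  then have "prim a = pcompose (pcompose At [:mu, lw:]) (normalized_inner W)"
    by (simp only: pcompose_assoc)
  moreover have "degree (pcompose At [:mu, lw:]) = m"
    using At(1) lw by (simp add: degree_pcompose m_def)
  ultimately have V0: "V0 = normalized_inner W"
    using inner_approx_recovers[OF k1 m1 N(1-3)] by (simp add: V0_def inner_map_def m_def)
  have WV: "W = pcompose [:mu, lw:] V0"
    using N(5) by (simp add: V0 mu_def lw_def)
  have G0: "smult (1 / c) (pcompose At W) = pcompose G0 V0"
    using tangent_first_order_identities(1)[OF k a pq] At(2)
    by (simp add: monic_prim_def c_def V0_def G0_def)
  have P1: "prim p1 = pcompose (smult c (pcompose dG Inv) - smult (c * d) At) W
      + smult lw dV * pcompose (pderiv At) W"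
    unfolding Inv_def
    by (rule pcompose_variation_normal_form[OF lw WV _ c G0]) (use var(6) At(2) N(1) V0 k1 in simp_all)
  have "degree Inv = 1"
    using lw by (simp add: Inv_def)
  then have "degree (smult c (pcompose dG Inv) - smult (c * d) At) \<le> m"
    using var(1) At(1) by (intro degree_diff_le) (simp_all add: degree_pcompose m_def)
  moreover have "degree (pcompose dH Inv) \<le> m"
    using var(2) \<open>degree Inv = 1\<close> by (simp add: degree_pcompose)
  moreover have "prim q1 = pcompose (pcompose dH Inv) W"
    using var(7) pcompose_affine_inverse[OF lw WV] by (simp add: Inv_def)
  moreover have "degree (smult lw dV) \<le> k" "poly (smult lw dV) 0 = poly (smult lw dV) 1"
    using var(3-5) by simp_all
  ultimately show ?thesis
    using P1 unfolding m_def by blast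
qed

lemma decomposable_pderiv_pcompose:
  assumes k: "1 < k" "k dvd n + 1"
    and G: "degree G = (n + 1) div k" and H: "degree H = (n + 1) div k"
    and V: "degree V = k" "poly V 0 = poly V 1"
  shows "(pderiv (pcompose G V), pderiv (pcompose H V)) \<in> decomposable n k"
proof -
  have m1: "1 \<le> (n + 1) div k"
    using one_le_div_of_dvd[OF k] .
  have "degree (pcompose G V) = n + 1" "degree (pcompose H V) = n + 1"
    using G H V k(2) by (simp_all add: degree_pcompose)
  then have "(pderiv (pcompose G V), pderiv (pcompose H V)) \<in> An n"
    by (simp add: An_def degree_pderiv)
  moreover have prim_eq: "prim (pderiv (pcompose P V)) = pcompose (P - [:coeff (pcompose P V) 0:]) V" for P
    by (simp add: prim_pderiv pcompose_diff)
  have "\<exists>At Bt W. degree At = (n + 1) div k \<and> degree Bt = (n + 1) div k \<and> degree W = k \<and>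
      poly W 0 = poly W 1 \<and> prim (pderiv (pcompose G V)) = pcompose At W \<and>
      prim (pderiv (pcompose H V)) = pcompose Bt W"
    by (rule exI[of _ "G - [:coeff (pcompose G V) 0:]"], rule exI[of _ "H - [:coeff (pcompose H V) 0:]"],
        rule exI[of _ V]) (use G H V m1 prim_eq in \<open>simp add: degree_diff_const\<close>)
  ultimately show ?thesis
    unfolding decomposable_def by simp
qed

lemma eventually_degree_line:
  fixes p q :: "complex poly"
  assumes "degree p \<le> d" "degree q \<le> d" "coeff p d \<noteq> 0 \<or> coeff q d \<noteq> 0"
  shows "\<forall>\<^sub>F t in at 0. degree (p + smult t q) = d"
proof -
  have "\<forall>\<^sub>F t in at 0. coeff p d + t * coeff q d \<noteq> 0"
  proof (cases "coeff p d = 0")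
    case True
    then show ?thesis
      using assms(3) by (simp add: eventually_at_filter)
  next
    case False
    then show ?thesis
      using nonzero_near_0 by (simp add: eventually_nhds_conv_at)
  qed
  then show ?thesis
    by (rule eventually_mono)
      (use assms(1,2) in \<open>auto intro!: degree_eq_of_coeff_nonzero degree_add_le
        order.trans[OF degree_smult_le]\<close>)
qed

lemma zariski_tangent_supset:
  assumes k: "1 < k" "k dvd n + 1" and a: "(a, 0) \<in> U_set n k"
    and W: "degree W = k" "poly W 0 = poly W 1"
    and At: "degree At = (n + 1) div k" "prim a = pcompose At W"
    and pq: "(p1, q1) \<in> An n"
    and Pt: "degree Pt \<le> (n + 1) div k" and Qt: "degree Qt \<le> (n + 1) div k"
    and R: "degree R \<le> k" "poly R 0 = poly R 1"
    and P1: "prim p1 = pcompose Pt W + R * pcompose (pderiv At) W"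
    and Q1: "prim q1 = pcompose Qt W"
  shows "(p1, q1) \<in> zariski_tangent n (U_set n k) (a, 0)"
proof -
  define m where "m = (n + 1) div k"
  define Gt where "Gt t = At + smult t Pt" for t
  define Bt where "Bt t = smult t (Qt + smult t (monom 1 m))" for t
  define Wt where "Wt t = W + smult t R" for t
  define \<gamma> where "\<gamma> t = (pderiv (pcompose (Gt t) (Wt t)), pderiv (pcompose (Bt t) (Wt t)))" for t
  have m1: "1 \<le> m"
    using one_le_div_of_dvd[OF k] by (simp add: m_def)
  have degGt: "degree (Gt t) \<le> m" and degBt: "degree (Bt t) \<le> m" for t
    using At(1) Pt Qt
    by (auto simp: Gt_def Bt_def m_def degree_monom_le
        intro!: degree_add_le order.trans[OF degree_smult_le])
  have HW: "has_poly_derivative Wt R"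
    unfolding Wt_def by (rule has_poly_derivative_line)
  have "has_poly_derivative Gt Pt"
    unfolding Gt_def by (rule has_poly_derivative_line)
  from has_poly_derivative_pderiv[OF has_poly_derivative_pcompose[OF this HW degGt]]
  have "has_poly_derivative (\<lambda>t. fst (\<gamma> t)) (pderiv (pcompose Pt W + pcompose (pderiv At) W * R))"
    by (simp add: \<gamma>_def Gt_def Wt_def)
  moreover have "has_poly_derivative Bt Qt"
    unfolding has_poly_derivative_def Bt_def by (auto intro!: derivative_eq_intros)
  from has_poly_derivative_pderiv[OF has_poly_derivative_pcompose[OF this HW degBt]]
  have "has_poly_derivative (\<lambda>t. snd (\<gamma> t)) (pderiv (pcompose Qt W))"
    by (simp add: \<gamma>_def Bt_def Wt_def)
  moreover have "\<gamma> 0 = (a, 0)"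
    using arg_cong[OF At(2), of pderiv] by (simp add: \<gamma>_def Gt_def Bt_def Wt_def)
  moreover have "\<forall>\<^sub>F t in at 0. \<gamma> t \<in> U_set n k"
  proof -
    have "coeff At m \<noteq> 0" "coeff W k \<noteq> 0"
      using At(1) W(1) m1 k by (auto simp: m_def)
    then have "\<forall>\<^sub>F t in at 0. degree (At + smult t Pt) = m"
        "\<forall>\<^sub>F t in at 0. degree (Qt + smult t (monom 1 m)) = m"
        "\<forall>\<^sub>F t in at 0. degree (W + smult t R) = k"
      using At(1) Pt Qt W(1) R(1)
      by (auto intro!: eventually_degree_line simp: m_def degree_monom_le)
    moreover have "\<forall>\<^sub>F t in at 0. t \<noteq> 0"
      by (simp add: eventually_at_filter)
    ultimately show ?thesis
    proof eventually_elim
      case (elim t)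
      moreover have "poly (Wt t) 0 = poly (Wt t) 1"
        using W(2) R(2) by (simp add: Wt_def)
      ultimately have "\<gamma> t \<in> decomposable n k"
        unfolding \<gamma>_def by (intro decomposable_pderiv_pcompose k) (simp_all add: Gt_def Bt_def Wt_def m_def)
      then show "\<gamma> t \<in> U_set n k"
        using subset_zariski_closure[OF decomposable_subset_An] by (auto simp: U_set_eq_closure)
    qed
  qed
  ultimately show ?thesis
    using curve_velocity_in_zariski_tangent[OF pq a, of \<gamma>]
      arg_cong[OF P1, of pderiv] arg_cong[OF Q1, of pderiv] by (simp add: mult.commute)
qed

lemma exists_lc_nonzero_point:
  assumes k: "1 < k" "k dvd n + 1"
  shows "\<exists>a. (a, 0) \<in> U_set n k \<and> coeff a n \<noteq> 0"
proof -
  define m where "m = (n + 1) div k"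
  define W :: "complex poly" where "W = monom 1 (k - 1) * [:-1, 1:]"
  define a where "a = pderiv (pcompose (monom 1 m) W)"
  have m: "degree (monom t m) = m" if "t \<noteq> 0" for t :: complex
    using that by (simp add: degree_monom_eq)
  have W: "degree W = k" "poly W 0 = poly W 1"
    unfolding W_def by (subst degree_mult_eq) (use k in \<open>auto simp: degree_monom_eq poly_monom\<close>)
  have "smult t a = pderiv (pcompose (monom t m) W)" for t
    by (simp add: a_def pcompose_monom pderiv_smult)
  then have decomposable: "(a, smult t a) \<in> decomposable n k" if "t \<noteq> 0" for t
    using decomposable_pderiv_pcompose[OF k _ _ W, of "monom 1 m" "monom t m"] m[of 1] m[OF that]
    by (simp add: a_def m_def)
  have "(a, 0) \<in> zariski_closure n (decomposable n k)"
  proof (rule curve_limit_in_zariski_closure)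
    show "(a, 0) \<in> An n"
      using decomposable[of 1] by (auto simp: decomposable_def An_def)
    show "\<forall>\<^sub>F t in at 0. (a, smult t a) \<in> decomposable n k"
      using decomposable by (simp add: eventually_at_filter)
    show "has_poly_derivative (\<lambda>t. fst (a, smult t a)) 0"
      by (simp add: has_poly_derivative_const)
    show "has_poly_derivative (\<lambda>t. snd (a, smult t a)) a"
      using has_poly_derivative_line[of 0 a] by simp
  qed simp
  moreover have "coeff a n \<noteq> 0"
    using lc_nonzero_on_decomposable[OF decomposable[of 1] k] by simp
  ultimately show ?thesis
    by (auto simp: U_set_eq_closure)
qed

theorem mainTheorem4:
  fixes n k :: nat
  assumes "k > 1" and "k dvd n + 1"
  shows "\<exists>g \<in> polyfun n.
     (\<exists>a. (a, 0) \<in> U_set n k \<and> g (a, 0) \<noteq> 0) \<and>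
     (\<forall>a At W. (a, 0) \<in> U_set n k \<longrightarrow> g (a, 0) \<noteq> 0 \<longrightarrow>
        degree W = k \<longrightarrow> poly W 0 = poly W 1 \<longrightarrow> degree At = (n + 1) div k \<longrightarrow>
        prim a = pcompose At W \<longrightarrow>
        zariski_tangent n (U_set n k) (a, 0) =
          {(p1, q1) \<in> An n. \<exists>Pt Qt R.
              degree Pt \<le> (n + 1) div k \<and> degree Qt \<le> (n + 1) div k \<and>
              degree R \<le> k \<and> poly R 0 = poly R 1 \<and>
              prim p1 = pcompose Pt W + R * pcompose (pderiv At) W \<and>
              prim q1 = pcompose Qt W})"
proof (intro bexI[of _ "\<lambda>x. coeff (fst x) n"] conjI allI impI polyfun_lc)
  show "\<exists>a. (a, 0) \<in> U_set n k \<and> coeff (fst (a, 0 :: complex poly)) n \<noteq> 0"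
    using exists_lc_nonzero_point[OF assms] by simp
next
  fix a At W :: "complex poly"
  assume a: "(a, 0) \<in> U_set n k" "coeff (fst (a, 0 :: complex poly)) n \<noteq> 0"
    and W: "degree W = k" "poly W 0 = poly W 1"
    and At: "degree At = (n + 1) div k" "prim a = pcompose At W"
  show "zariski_tangent n (U_set n k) (a, 0) =
      {(p1, q1) \<in> An n. \<exists>Pt Qt R.
         degree Pt \<le> (n + 1) div k \<and> degree Qt \<le> (n + 1) div k \<and>
         degree R \<le> k \<and> poly R 0 = poly R 1 \<and>
         prim p1 = pcompose Pt W + R * pcompose (pderiv At) W \<and> prim q1 = pcompose Qt W}"
    using zariski_tangent_subset[OF assms a(1) _ W At] zariski_tangent_supset[OF assms a(1) W At] a(2)
    by (auto simp: zariski_tangent_def)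
qed

end
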